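(* Up to isomorphism, there are exactly two connected strongly regular signed graphs that are $5$-regular and $1$ net-regular, namely $\dot G_2$ (complete, parameters $(6,5,-4,4)$) and $\dot S^1_{12}$ (parameters $(12,5,2,1,-2)$), defined in the context.
   Context: A signed graph $\dot G=(G,\sigma)$ is a simple graph $G$ with $\sigma:E(G)\to\{\pm1\}$; adjacency matrix $A_{\dot G}$ has entries $\sigma(v_iv_j)$ for adjacent vertices and $0$ otherwise. Degree and connectedness refer to $G$; the net-degree of $v$ is $d^+(v)-d^-(v)$ (numbers of positive minus negative incident edges); $\rho$ net-regular means every vertex has net-degree $\rho$. $\dot G$ on $n$ vertices is a strongly regular signed graph (SRSG) if it is neither a homogeneous (all edges of one sign) complete graph nor edgeless, and there exist $r\in\mathbb N$, $a,b,c\in\mathbb Z$ with $(A^2_{\dot G})_{ii}=r$, $(A^2_{\dot G})_{ij}=a$ whenever $v_iv_j$ is a positive edge, $b$ whenever it is a negative edge, and $c$ whenever $i\ne j$, $v_i\not\sim v_j$. Parameters are $(n,r,a,b,c)$ if non-complete, $(n,r,a,b)$ if complete. Isomorphism means sign-preserving graph isomorphism. $\dot G_2$ is $K_6$ whose negative edges form two vertex-disjoint triangles (so the positive edges form $K_{3,3}$). $\dot S^1_{12}$ has vertex set $\{(s,t): s\in\{1,2,3,4\}, t\in\{1,2,3\}\}$, with $(s,t)(s',t)$ a positive edge for all $s\ne s'$, $(s,t)(s,t')$ a negative edge for all $t\neq t'$, and no other edges (the Cartesian product $K_4\,\square\, K_3$ with the $K_4$-edges positive and the $K_3$-edges negative).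 *)

theory Defs
  imports Main
begin

text \<open>A signed graph is given by a finite vertex set V and a signed adjacency
  function sigma: sigma u v is the entry of the signed adjacency matrix,
  i.e. 1 (positive edge), -1 (negative edge) or 0 (no edge).\<close>

definition signed_graph :: "'a set \<Rightarrow> ('a \<Rightarrow> 'a \<Rightarrow> int) \<Rightarrow> bool" where
  "signed_graph V \<sigma> \<longleftrightarrow> finite V
     \<and> (\<forall>u v. \<sigma> u v \<in> {-1, 0, 1})
     \<and> (\<forall>u v. \<sigma> u v = \<sigma> v u)
     \<and> (\<forall>u. \<sigma> u u = 0)
     \<and> (\<forall>u v. \<sigma> u v \<noteq> 0 \<longrightarrow> u \<in> V \<and> v \<in> V)"

definition adj_sq :: "'a set \<Rightarrow> ('a \<Rightarrow> 'a \<Rightarrow> int) \<Rightarrow> 'a \<Rightarrow> 'a \<Rightarrow> int" where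
  "adj_sq V \<sigma> u v = (\<Sum>w\<in>V. \<sigma> u w * \<sigma> w v)"

definition sg_degree :: "'a set \<Rightarrow> ('a \<Rightarrow> 'a \<Rightarrow> int) \<Rightarrow> 'a \<Rightarrow> nat" where
  "sg_degree V \<sigma> v = card {w\<in>V. \<sigma> v w \<noteq> 0}"

definition net_degree :: "'a set \<Rightarrow> ('a \<Rightarrow> 'a \<Rightarrow> int) \<Rightarrow> 'a \<Rightarrow> int" where
  "net_degree V \<sigma> v = int (card {w\<in>V. \<sigma> v w = 1}) - int (card {w\<in>V. \<sigma> v w = -1})"

definition sg_regular :: "'a set \<Rightarrow> ('a \<Rightarrow> 'a \<Rightarrow> int) \<Rightarrow> nat \<Rightarrow> bool" where
  "sg_regular V \<sigma> r \<longleftrightarrow> (\<forall>v\<in>V. sg_degree V \<sigma> v = r)"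

definition net_regular :: "'a set \<Rightarrow> ('a \<Rightarrow> 'a \<Rightarrow> int) \<Rightarrow> int \<Rightarrow> bool" where
  "net_regular V \<sigma> \<rho> \<longleftrightarrow> (\<forall>v\<in>V. net_degree V \<sigma> v = \<rho>)"

definition sg_connected :: "'a set \<Rightarrow> ('a \<Rightarrow> 'a \<Rightarrow> int) \<Rightarrow> bool" where
  "sg_connected V \<sigma> \<longleftrightarrow> V \<noteq> {} \<and>
     (\<forall>u\<in>V. \<forall>v\<in>V. (\<lambda>x y. \<sigma> x y \<noteq> 0)\<^sup>*\<^sup>* u v)"

definition sg_complete :: "'a set \<Rightarrow> ('a \<Rightarrow> 'a \<Rightarrow> int) \<Rightarrow> bool" where
  "sg_complete V \<sigma> \<longleftrightarrow> (\<forall>u\<in>V. \<forall>v\<in>V. u \<noteq> v \<longrightarrow> \<sigma> u v \<noteq> 0)"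

definition sg_homogeneous :: "'a set \<Rightarrow> ('a \<Rightarrow> 'a \<Rightarrow> int) \<Rightarrow> bool" where
  "sg_homogeneous V \<sigma> \<longleftrightarrow> (\<forall>u\<in>V. \<forall>v\<in>V. \<sigma> u v \<ge> 0) \<or> (\<forall>u\<in>V. \<forall>v\<in>V. \<sigma> u v \<le> 0)"

definition sg_edgeless :: "'a set \<Rightarrow> ('a \<Rightarrow> 'a \<Rightarrow> int) \<Rightarrow> bool" where
  "sg_edgeless V \<sigma> \<longleftrightarrow> (\<forall>u\<in>V. \<forall>v\<in>V. \<sigma> u v = 0)"

definition srsg_conds :: "'a set \<Rightarrow> ('a \<Rightarrow> 'a \<Rightarrow> int) \<Rightarrow> nat \<Rightarrow> int \<Rightarrow> int \<Rightarrow> int \<Rightarrow> bool" where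
  "srsg_conds V \<sigma> r a b c \<longleftrightarrow>
     (\<forall>i\<in>V. adj_sq V \<sigma> i i = int r)
   \<and> (\<forall>i\<in>V. \<forall>j\<in>V. \<sigma> i j = 1 \<longrightarrow> adj_sq V \<sigma> i j = a)
   \<and> (\<forall>i\<in>V. \<forall>j\<in>V. \<sigma> i j = -1 \<longrightarrow> adj_sq V \<sigma> i j = b)
   \<and> (\<forall>i\<in>V. \<forall>j\<in>V. i \<noteq> j \<and> \<sigma> i j = 0 \<longrightarrow> adj_sq V \<sigma> i j = c)"

definition SRSG :: "'a set \<Rightarrow> ('a \<Rightarrow> 'a \<Rightarrow> int) \<Rightarrow> bool" where
  "SRSG V \<sigma> \<longleftrightarrow> signed_graph V \<sigma>
     \<and> \<not> (sg_complete V \<sigma> \<and> sg_homogeneous V \<sigma>)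
     \<and> \<not> sg_edgeless V \<sigma>
     \<and> (\<exists>r a b c. srsg_conds V \<sigma> r a b c)"

definition srsg_params :: "'a set \<Rightarrow> ('a \<Rightarrow> 'a \<Rightarrow> int) \<Rightarrow> nat \<Rightarrow> nat \<Rightarrow> int \<Rightarrow> int \<Rightarrow> int \<Rightarrow> bool" where
  "srsg_params V \<sigma> n r a b c \<longleftrightarrow> SRSG V \<sigma> \<and> \<not> sg_complete V \<sigma> \<and> card V = n
     \<and> srsg_conds V \<sigma> r a b c"

definition srsg_params_complete :: "'a set \<Rightarrow> ('a \<Rightarrow> 'a \<Rightarrow> int) \<Rightarrow> nat \<Rightarrow> nat \<Rightarrow> int \<Rightarrow> int \<Rightarrow> bool" where
  "srsg_params_complete V \<sigma> n r a b \<longleftrightarrow> SRSG V \<sigma> \<and> sg_complete V \<sigma> \<and> card V = n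
     \<and> (\<forall>c. srsg_conds V \<sigma> r a b c)"

definition sg_iso :: "'a set \<Rightarrow> ('a \<Rightarrow> 'a \<Rightarrow> int) \<Rightarrow> 'b set \<Rightarrow> ('b \<Rightarrow> 'b \<Rightarrow> int) \<Rightarrow> bool" where
  "sg_iso V1 \<sigma>1 V2 \<sigma>2 \<longleftrightarrow> (\<exists>f. bij_betw f V1 V2 \<and> (\<forall>u\<in>V1. \<forall>v\<in>V1. \<sigma>2 (f u) (f v) = \<sigma>1 u v))"

text \<open>G2: K_6 on {0..5} with negative triangles {0,1,2} and {3,4,5}.\<close>
definition G2_V :: "nat set" where "G2_V = {0..5}"
definition G2_sig :: "nat \<Rightarrow> nat \<Rightarrow> int" where
  "G2_sig u v = (if u \<in> G2_V \<and> v \<in> G2_V \<and> u \<noteq> v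
                 then (if (u < 3) = (v < 3) then -1 else 1) else 0)"

text \<open>S^1_12: K_4 (positive) box K_3 (negative) on {1..4} x {1..3}.\<close>
definition S12_V :: "(nat \<times> nat) set" where "S12_V = {1..4} \<times> {1..3}"
definition S12_sig :: "nat \<times> nat \<Rightarrow> nat \<times> nat \<Rightarrow> int" where
  "S12_sig x y = (if x \<in> S12_V \<and> y \<in> S12_V then
     (if snd x = snd y \<and> fst x \<noteq> fst y then 1
      else if fst x = fst y \<and> snd x \<noteq> snd y then -1 else 0) else 0)"

end

theory Submission
  imports Defs
begin

(* Fix a vertex x with positive neighbours p1, p2, p3 and negative neighbours q1, q2.  The
   entries of A^2 from x to its neighbours are linear in the ten signs among p1, ..., q2.  Since
   every row sum of A is 1, A commutes with J, and writing 2 A^2 as a combination of J, I, A and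
   |A| shows that A also commutes with |A| unless a + b = 2c.  Together with the degree bounds at
   the neighbours this leaves a finite check whose outcome is a = -4 or
   (a, b) in {(2,-2), (0,0), (0,1), (2,0), (2,1)}; in the last four cases every neighbourhood
   carries the same sign pattern.

   For a = -4 each closed neighbourhood is a K6 with two negative triangles, so a connected graph
   is this K6, and a + b = 2c forces a = -4 through the row-sum identity 3a + 2b + c (n - 6) = -4.
   The cases (2,-2), (0,0), (0,1) and (2,0) are refuted by counting the neighbours among
   p1, ..., q2 of the vertices outside the closed neighbourhood of x.  For (2,1), being equal or
   positively adjacent and being equal or negatively adjacent are equivalence relations with
   classes of sizes 4 and 3, and the pair of classes of a vertex is its coordinate in K4 x K3. *)

section \<open>The signed graphs G2 and S12\<close>

lemma sg_connected_if_complete: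
  assumes "sg_complete V \<sigma>" "V \<noteq> {}"
  shows "sg_connected V \<sigma>"
  unfolding sg_connected_def
proof (intro conjI ballI)
  fix u v assume "u \<in> V" "v \<in> V"
  with assms(1) show "(\<lambda>x y. \<sigma> x y \<noteq> 0)\<^sup>*\<^sup>* u v"
    by (cases "u = v") (auto simp: sg_complete_def)
qed (fact assms(2))

lemma card_filter_distinct_list:
  "distinct xs \<Longrightarrow> card {w \<in> set xs. P w} = length (filter P xs)"
  by (metis distinct_card distinct_filter set_filter)

(* The vertex lists are constants so that simp converts sums and counts over G2_V and S12_V
   into list sums before it unfolds the lists themselves. *)
definition G2_vertex_list :: "nat list" where
  "G2_vertex_list = [0, 1, 2, 3, 4, 5]"

lemma G2_V_eq_set: "G2_V = set G2_vertex_list"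
  by (auto simp: G2_V_def G2_vertex_list_def)

lemma distinct_G2_vertex_list: "distinct G2_vertex_list"
  by (simp add: G2_vertex_list_def)

lemma G2_sig_eq:
  "G2_sig u v = (if u < 6 \<and> v < 6 \<and> u \<noteq> v then (if (u < 3) = (v < 3) then -1 else 1) else 0)"
  by (auto simp: G2_sig_def G2_V_def)

lemma G2_signed_graph: "signed_graph G2_V G2_sig"
  by (auto simp: signed_graph_def G2_sig_def G2_V_def)

lemma G2_complete: "sg_complete G2_V G2_sig"
  by (auto simp: sg_complete_def G2_sig_def)

lemma G2_card: "card G2_V = 6"
  by (simp add: G2_V_def)

lemma G2_adj_sq:
  "\<forall>i\<in>G2_V. \<forall>j\<in>G2_V. adj_sq G2_V G2_sig i j = (if i = j then 5 else if G2_sig i j = 1 then -4 else 4)"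
  unfolding adj_sq_def G2_V_eq_set
  by (simp add: sum.distinct_set_conv_list distinct_G2_vertex_list) (simp add: G2_vertex_list_def G2_sig_eq)

lemma G2_regular: "sg_regular G2_V G2_sig 5"
  unfolding sg_regular_def sg_degree_def G2_V_eq_set
  by (simp add: card_filter_distinct_list distinct_G2_vertex_list) (simp add: G2_vertex_list_def G2_sig_eq)

lemma G2_net_regular: "net_regular G2_V G2_sig 1"
  unfolding net_regular_def net_degree_def G2_V_eq_set
  by (simp add: card_filter_distinct_list distinct_G2_vertex_list) (simp add: G2_vertex_list_def G2_sig_eq)

lemma G2_srsg_conds: "srsg_conds G2_V G2_sig 5 (-4) 4 c"
  using G2_adj_sq G2_complete by (auto simp: srsg_conds_def sg_complete_def G2_sig_def)

lemma G2_SRSG: "SRSG G2_V G2_sig"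
proof -
  have "G2_sig 0 1 = -1" "G2_sig 0 3 = 1" "(0::nat) \<in> G2_V" "(1::nat) \<in> G2_V" "(3::nat) \<in> G2_V"
    by (simp_all add: G2_sig_eq G2_V_def)
  then have "\<not> sg_homogeneous G2_V G2_sig" "\<not> sg_edgeless G2_V G2_sig"
    by (force simp: sg_homogeneous_def sg_edgeless_def)+
  then show ?thesis
    using G2_signed_graph G2_srsg_conds[of 0] by (auto simp: SRSG_def)
qed

lemma G2_params: "srsg_params_complete G2_V G2_sig 6 5 (-4) 4"
  using G2_SRSG G2_complete G2_card G2_srsg_conds by (simp add: srsg_params_complete_def)

lemma G2_connected: "sg_connected G2_V G2_sig"
  using G2_complete by (rule sg_connected_if_complete) (simp add: G2_V_def)

definition S12_vertex_list :: "(nat \<times> nat) list" where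
  "S12_vertex_list = [(1,1), (1,2), (1,3), (2,1), (2,2), (2,3), (3,1), (3,2), (3,3), (4,1), (4,2), (4,3)]"

lemma S12_V_eq_set: "S12_V = set S12_vertex_list"
proof -
  have "{1..4::nat} = {1,2,3,4}" "{1..3::nat} = {1,2,3}" by auto
  then show ?thesis by (auto simp: S12_V_def S12_vertex_list_def)
qed

lemma distinct_S12_vertex_list: "distinct S12_vertex_list"
  by (simp add: S12_vertex_list_def)

lemma S12_sig_eq:
  "S12_sig (i, j) (k, l) = (if i \<in> {1..4} \<and> j \<in> {1..3} \<and> k \<in> {1..4} \<and> l \<in> {1..3} then
     (if j = l \<and> i \<noteq> k then 1 else if i = k \<and> j \<noteq> l then -1 else 0) else 0)"
  by (simp add: S12_sig_def S12_V_def)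

lemma S12_adj_sq:
  "\<forall>i\<in>S12_V. \<forall>j\<in>S12_V. adj_sq S12_V S12_sig i j =
     (if i = j then 5 else if S12_sig i j = 1 then 2 else if S12_sig i j = -1 then 1 else -2)"
  unfolding adj_sq_def S12_V_eq_set
  by (simp add: sum.distinct_set_conv_list distinct_S12_vertex_list) (simp add: S12_vertex_list_def S12_sig_eq)

lemma S12_regular: "sg_regular S12_V S12_sig 5"
  unfolding sg_regular_def sg_degree_def S12_V_eq_set
  by (simp add: card_filter_distinct_list distinct_S12_vertex_list) (simp add: S12_vertex_list_def S12_sig_eq)

lemma S12_net_regular: "net_regular S12_V S12_sig 1"
  unfolding net_regular_def net_degree_def S12_V_eq_set
  by (simp add: card_filter_distinct_list distinct_S12_vertex_list) (simp add: S12_vertex_list_def S12_sig_eq)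

lemma S12_card: "card S12_V = 12"
  by (simp add: S12_V_eq_set distinct_S12_vertex_list distinct_card) (simp add: S12_vertex_list_def)

lemma S12_sig_diag: "S12_sig u u = 0"
  by (simp add: S12_sig_def)

lemma S12_signed_graph: "signed_graph S12_V S12_sig"
proof -
  have "S12_sig u v = S12_sig v u" for u v
  proof -
    have "(u \<in> S12_V \<and> v \<in> S12_V) = (v \<in> S12_V \<and> u \<in> S12_V)"
      "(snd u = snd v \<and> fst u \<noteq> fst v) = (snd v = snd u \<and> fst v \<noteq> fst u)"
      "(fst u = fst v \<and> snd u \<noteq> snd v) = (fst v = fst u \<and> snd v \<noteq> snd u)"
      by auto
    then show ?thesis unfolding S12_sig_def by presburger
  qed
  moreover have "S12_sig u v \<in> {-1, 0, 1}" for u v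
    by (simp add: S12_sig_def)
  moreover have "S12_sig u v \<noteq> 0 \<Longrightarrow> u \<in> S12_V \<and> v \<in> S12_V" for u v
    by (simp add: S12_sig_def split: if_splits)
  moreover have "finite S12_V" by (simp add: S12_V_def)
  ultimately show ?thesis by (simp add: signed_graph_def S12_sig_diag)
qed

lemma S12_srsg_conds: "srsg_conds S12_V S12_sig 5 2 1 (-2)"
  using S12_adj_sq by (auto simp: srsg_conds_def S12_sig_diag)

lemma S12_not_complete: "\<not> sg_complete S12_V S12_sig"
proof -
  have "S12_sig (1, 1) (2, 2) = 0" "(1, 1) \<in> S12_V" "(2, 2) \<in> S12_V"
    by (simp_all add: S12_sig_eq S12_V_def)
  then show ?thesis by (force simp: sg_complete_def)
qed

lemma S12_SRSG: "SRSG S12_V S12_sig"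
proof -
  have "S12_sig (1, 1) (2, 1) = 1" "(1, 1) \<in> S12_V" "(2, 1) \<in> S12_V"
    by (simp_all add: S12_sig_eq S12_V_def)
  then have "\<not> sg_edgeless S12_V S12_sig" by (force simp: sg_edgeless_def)
  then show ?thesis
    using S12_signed_graph S12_not_complete S12_srsg_conds by (auto simp: SRSG_def)
qed

lemma S12_params: "srsg_params S12_V S12_sig 12 5 2 1 (-2)"
  using S12_SRSG S12_not_complete S12_card S12_srsg_conds by (simp add: srsg_params_def)

lemma S12_connected: "sg_connected S12_V S12_sig"
  unfolding sg_connected_def
proof (intro conjI ballI)
  show "S12_V \<noteq> {}" by (simp add: S12_V_def)
  have line: "(\<lambda>x y. S12_sig x y \<noteq> 0)\<^sup>*\<^sup>* u v"
    if "u \<in> S12_V" "v \<in> S12_V" "fst u = fst v \<or> snd u = snd v" for u v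
  proof (cases "u = v")
    case False
    then have "S12_sig u v \<noteq> 0" using that by (auto simp: S12_sig_def prod_eq_iff)
    then show ?thesis by auto
  qed simp
  fix u v assume u: "u \<in> S12_V" and v: "v \<in> S12_V"
  then have corner: "(fst u, snd v) \<in> S12_V" by (auto simp: S12_V_def)
  show "(\<lambda>x y. S12_sig x y \<noteq> 0)\<^sup>*\<^sup>* u v"
    using line[OF u corner] line[OF corner v] by (auto intro: rtranclp_trans)
qed

lemma G2_not_iso_S12: "\<not> sg_iso G2_V G2_sig S12_V S12_sig"
  using bij_betw_same_card G2_card S12_card by (fastforce simp: sg_iso_def)

section \<open>Recognising S12 by its sign classes\<close>

definition sign_class :: "('a \<Rightarrow> 'a \<Rightarrow> int) \<Rightarrow> int \<Rightarrow> 'a \<Rightarrow> 'a set" where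
  "sign_class \<sigma> e u = {w. w = u \<or> \<sigma> u w = e}"

lemma sign_class_eq_iff:
  assumes sym: "\<And>u v. \<sigma> u v = \<sigma> v u"
    and trans: "\<And>u v w. \<sigma> u v = e \<Longrightarrow> \<sigma> v w = e \<Longrightarrow> u \<noteq> w \<Longrightarrow> \<sigma> u w = e"
  shows "sign_class \<sigma> e u = sign_class \<sigma> e v \<longleftrightarrow> u = v \<or> \<sigma> u v = e"
proof
  assume "sign_class \<sigma> e u = sign_class \<sigma> e v"
  then have "v \<in> sign_class \<sigma> e u" by (simp add: sign_class_def)
  then show "u = v \<or> \<sigma> u v = e" by (auto simp: sign_class_def)
next
  assume "u = v \<or> \<sigma> u v = e"
  then have "w = u \<or> \<sigma> u w = e \<longleftrightarrow> w = v \<or> \<sigma> v w = e" for w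
    using sym trans by metis
  then show "sign_class \<sigma> e u = sign_class \<sigma> e v" by (simp add: sign_class_def)
qed

lemma card_sign_classes:
  assumes sg: "signed_graph V \<sigma>" and e: "e \<noteq> 0"
    and trans: "\<And>u v w. \<sigma> u v = e \<Longrightarrow> \<sigma> v w = e \<Longrightarrow> u \<noteq> w \<Longrightarrow> \<sigma> u w = e"
    and deg: "\<And>u. u \<in> V \<Longrightarrow> card {w. \<sigma> u w = e} = d"
  shows "(d + 1) * card (sign_class \<sigma> e ` V) = card V"
proof -
  have fin: "finite V" and sym: "\<And>u v. \<sigma> u v = \<sigma> v u" and diag: "\<And>u. \<sigma> u u = 0"
    and supp: "\<And>u v. \<sigma> u v \<noteq> 0 \<Longrightarrow> v \<in> V"
    using sg unfolding signed_graph_def by blast+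
  have eq_iff: "sign_class \<sigma> e u = sign_class \<sigma> e v \<longleftrightarrow> u = v \<or> \<sigma> u v = e" for u v
    using sym trans by (rule sign_class_eq_iff)
  have sub: "sign_class \<sigma> e u \<subseteq> V" if "u \<in> V" for u
    using that supp e by (auto simp: sign_class_def)
  have "(d + 1) * card (sign_class \<sigma> e ` V) = card (\<Union> (sign_class \<sigma> e ` V))"
  proof (rule card_partition)
    show "finite (\<Union> (sign_class \<sigma> e ` V))"
      using sub fin by (meson UN_least finite_subset)
    show "card c = d + 1" if c: "c \<in> sign_class \<sigma> e ` V" for c
    proof -
      obtain u where u: "u \<in> V" "c = sign_class \<sigma> e u" using c by blast
      have "c = insert u {w. \<sigma> u w = e}" "u \<notin> {w. \<sigma> u w = e}"
        using u(2) diag[of u] e by (auto simp: sign_class_def)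
      moreover have "finite {w. \<sigma> u w = e}"
        using fin supp e by (metis (mono_tags) finite_subset mem_Collect_eq subsetI)
      ultimately show ?thesis using deg[OF u(1)] by simp
    qed
    show "c1 \<inter> c2 = {}"
      if c: "c1 \<in> sign_class \<sigma> e ` V" "c2 \<in> sign_class \<sigma> e ` V" and ne: "c1 \<noteq> c2" for c1 c2
    proof (rule ccontr)
      assume "c1 \<inter> c2 \<noteq> {}"
      then obtain w where w: "w \<in> c1" "w \<in> c2" by blast
      obtain u v where uv: "c1 = sign_class \<sigma> e u" "c2 = sign_class \<sigma> e v" using c by blast
      have "c1 = sign_class \<sigma> e w" "c2 = sign_class \<sigma> e w"
        using w unfolding uv by (simp_all add: eq_iff) (auto simp: sign_class_def)
      with ne show False by simp
    qed
  qed (use fin in simp)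
  also have "\<Union> (sign_class \<sigma> e ` V) = V"
    using sub by (auto simp: sign_class_def)
  finally show ?thesis .
qed

lemma sign_class_coordinate:
  assumes sg: "signed_graph V \<sigma>" and e: "e \<noteq> 0"
    and trans: "\<And>u v w. \<sigma> u v = e \<Longrightarrow> \<sigma> v w = e \<Longrightarrow> u \<noteq> w \<Longrightarrow> \<sigma> u w = e"
    and deg: "\<And>u. u \<in> V \<Longrightarrow> card {w. \<sigma> u w = e} = d"
    and card: "card V = (d + 1) * k"
  shows "\<exists>g :: 'a \<Rightarrow> nat. (\<forall>u\<in>V. g u \<in> {1..k})
    \<and> (\<forall>u\<in>V. \<forall>v\<in>V. g u = g v \<longleftrightarrow> u = v \<or> \<sigma> u v = e)"
proof -
  have fin: "finite V" and sym: "\<And>u v. \<sigma> u v = \<sigma> v u"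
    using sg unfolding signed_graph_def by blast+
  have "(d + 1) * card (sign_class \<sigma> e ` V) = card V"
    using sg e trans deg by (rule card_sign_classes)
  with card have "(d + 1) * card (sign_class \<sigma> e ` V) = (d + 1) * k" by simp
  then have "card (sign_class \<sigma> e ` V) = card {1..k}"
    by (subst (asm) mult_left_cancel) simp_all
  then obtain h where h: "bij_betw h (sign_class \<sigma> e ` V) {1..k}"
    using fin finite_same_card_bij[of "sign_class \<sigma> e ` V" "{1..k}"] by blast
  have eq_iff: "sign_class \<sigma> e u = sign_class \<sigma> e v \<longleftrightarrow> u = v \<or> \<sigma> u v = e" for u v
    using sym trans by (rule sign_class_eq_iff)
  show ?thesis
  proof (intro exI[of _ "h \<circ> sign_class \<sigma> e"] conjI ballI)
    show "(h \<circ> sign_class \<sigma> e) u \<in> {1..k}" if "u \<in> V" for u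
      using bij_betw_apply[OF h] that by simp
    show "(h \<circ> sign_class \<sigma> e) u = (h \<circ> sign_class \<sigma> e) v \<longleftrightarrow> u = v \<or> \<sigma> u v = e"
      if "u \<in> V" "v \<in> V" for u v
    proof -
      have "h (sign_class \<sigma> e u) = h (sign_class \<sigma> e v) \<longleftrightarrow> sign_class \<sigma> e u = sign_class \<sigma> e v"
        using inj_on_eq_iff[OF bij_betw_imp_inj_on[OF h]] that by blast
      then show ?thesis by (simp add: eq_iff)
    qed
  qed
qed

lemma sg_iso_S12_if_sign_classes:
  assumes sg: "signed_graph V \<sigma>" and card: "card V = 12"
    and pos_trans: "\<And>u v w. \<sigma> u v = 1 \<Longrightarrow> \<sigma> v w = 1 \<Longrightarrow> u \<noteq> w \<Longrightarrow> \<sigma> u w = 1"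
    and neg_trans: "\<And>u v w. \<sigma> u v = -1 \<Longrightarrow> \<sigma> v w = -1 \<Longrightarrow> u \<noteq> w \<Longrightarrow> \<sigma> u w = -1"
    and pos_deg: "\<And>u. u \<in> V \<Longrightarrow> card {w. \<sigma> u w = 1} = 3"
    and neg_deg: "\<And>u. u \<in> V \<Longrightarrow> card {w. \<sigma> u w = -1} = 2"
  shows "sg_iso V \<sigma> S12_V S12_sig"
proof -
  have diag: "\<And>u. \<sigma> u u = 0" and vals: "\<And>u v. \<sigma> u v \<in> {-1, 0, 1}"
    using sg by (auto simp: signed_graph_def)
  have "\<exists>g :: 'a \<Rightarrow> nat. (\<forall>u\<in>V. g u \<in> {1..4}) \<and> (\<forall>u\<in>V. \<forall>v\<in>V. g u = g v \<longleftrightarrow> u = v \<or> \<sigma> u v = -1)"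
    by (rule sign_class_coordinate[of V \<sigma> "-1" 2 4]) (fact sg neg_trans neg_deg | simp add: card)+
  then obtain g :: "'a \<Rightarrow> nat" where g: "\<forall>u\<in>V. g u \<in> {1..4}"
    "\<forall>u\<in>V. \<forall>v\<in>V. g u = g v \<longleftrightarrow> u = v \<or> \<sigma> u v = -1" by blast
  have "\<exists>h :: 'a \<Rightarrow> nat. (\<forall>u\<in>V. h u \<in> {1..3}) \<and> (\<forall>u\<in>V. \<forall>v\<in>V. h u = h v \<longleftrightarrow> u = v \<or> \<sigma> u v = 1)"
    by (rule sign_class_coordinate[of V \<sigma> 1 3 3]) (fact sg pos_trans pos_deg | simp add: card)+
  then obtain h :: "'a \<Rightarrow> nat" where h: "\<forall>u\<in>V. h u \<in> {1..3}"
    "\<forall>u\<in>V. \<forall>v\<in>V. h u = h v \<longleftrightarrow> u = v \<or> \<sigma> u v = 1" by blast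
  define f where "f u = (g u, h u)" for u
  have inj: "inj_on f V"
    using g(2) h(2) by (fastforce simp: inj_on_def f_def)
  have into: "f u \<in> S12_V" if "u \<in> V" for u
    using g(1) h(1) that by (simp add: f_def S12_V_def)
  then have "f ` V = S12_V"
    using card_image[OF inj] card S12_card card_subset_eq[of S12_V "f ` V"] S12_V_eq_set
    by (metis List.finite_set image_subsetI)
  moreover have "S12_sig (f u) (f v) = \<sigma> u v" if "u \<in> V" "v \<in> V" for u v
    using g(2) h(2) that into[OF that(1)] into[OF that(2)] diag vals[of u v]
    by (auto simp: S12_sig_def f_def)
  ultimately show ?thesis
    using inj by (auto simp: sg_iso_def bij_betw_def)
qed

section \<open>SRSGs with \<open>r = 5\<close> and net-degree 1\<close>

lemma adj_sq_diag:
  assumes "signed_graph V \<sigma>" "x \<in> V"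
  shows "adj_sq V \<sigma> x x = int (sg_degree V \<sigma> x)"
proof -
  have "\<sigma> x w * \<sigma> w x = of_bool (\<sigma> x w \<noteq> 0)" for w
  proof -
    have "\<sigma> w x = \<sigma> x w" "\<sigma> x w \<in> {-1, 0, 1}" using assms(1) by (simp_all add: signed_graph_def)
    then show ?thesis by auto
  qed
  then show ?thesis
    using assms(1) by (simp add: adj_sq_def sg_degree_def signed_graph_def Collect_conj_eq)
qed

lemma adj_sq_assoc:
  assumes "finite V"
  shows "(\<Sum>w\<in>V. \<sigma> x w * adj_sq V \<sigma> w u) = (\<Sum>w\<in>V. adj_sq V \<sigma> x w * \<sigma> w u)"
proof -
  have "(\<Sum>w\<in>V. \<sigma> x w * adj_sq V \<sigma> w u) = (\<Sum>w\<in>V. \<Sum>y\<in>V. \<sigma> x w * \<sigma> w y * \<sigma> y u)"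
    unfolding adj_sq_def by (simp add: sum_distrib_left mult.assoc)
  also have "\<dots> = (\<Sum>y\<in>V. \<Sum>w\<in>V. \<sigma> x w * \<sigma> w y * \<sigma> y u)"
    by (rule sum.swap)
  also have "\<dots> = (\<Sum>w\<in>V. adj_sq V \<sigma> x w * \<sigma> w u)"
    unfolding adj_sq_def by (simp add: sum_distrib_right)
  finally show ?thesis .
qed

lemma le_if_mult_eq_neg:
  fixes c m k :: int
  assumes "c * m = - k" "m > 0" "k > 0"
  shows "m \<le> k"
proof -
  have "c < 0"
  proof (rule ccontr)
    assume "\<not> c < 0"
    then have "c * m \<ge> 0" using assms(2) by simp
    with assms(1,3) show False by simp
  qed
  then have "1 * m \<le> (- c) * m" using assms(2) by (intro mult_right_mono) auto
  with assms(1) show ?thesis by simp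
qed

(* The signs e_ij, f_ij and g stand for s p_i p_j, s p_i q_j and s q1 q2, where p1, p2, p3 and
   q1, q2 are the positive and negative neighbours of a vertex x.  The hypotheses are the degree
   bounds at the five neighbours, the entries of A^2 from x to them, and the entries from x to
   them of the commutation relation of A with |A|. *)
lemma local_sign_patterns:
  fixes a b e12 e13 e23 f11 f12 f21 f22 f31 f32 g :: int
  assumes "\<bar>e12\<bar> \<le> 1" "\<bar>e13\<bar> \<le> 1" "\<bar>e23\<bar> \<le> 1" "\<bar>f11\<bar> \<le> 1" "\<bar>f12\<bar> \<le> 1"
      "\<bar>f21\<bar> \<le> 1" "\<bar>f22\<bar> \<le> 1" "\<bar>f31\<bar> \<le> 1" "\<bar>f32\<bar> \<le> 1" "\<bar>g\<bar> \<le> 1"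
    and "of_bool (e12 = 1) + of_bool (e13 = 1) + of_bool (f11 = 1) + of_bool (f12 = 1) \<le> (2::int)"
      "of_bool (e12 = -1) + of_bool (e13 = -1) + of_bool (f11 = -1) + of_bool (f12 = -1) \<le> (2::int)"
      "of_bool (e12 = 1) + of_bool (e23 = 1) + of_bool (f21 = 1) + of_bool (f22 = 1) \<le> (2::int)"
      "of_bool (e12 = -1) + of_bool (e23 = -1) + of_bool (f21 = -1) + of_bool (f22 = -1) \<le> (2::int)"
      "of_bool (e13 = 1) + of_bool (e23 = 1) + of_bool (f31 = 1) + of_bool (f32 = 1) \<le> (2::int)"
      "of_bool (e13 = -1) + of_bool (e23 = -1) + of_bool (f31 = -1) + of_bool (f32 = -1) \<le> (2::int)"
      "of_bool (f11 = 1) + of_bool (f21 = 1) + of_bool (f31 = 1) + of_bool (g = 1) \<le> (3::int)"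
      "of_bool (f11 = -1) + of_bool (f21 = -1) + of_bool (f31 = -1) + of_bool (g = -1) \<le> (1::int)"
      "of_bool (f12 = 1) + of_bool (f22 = 1) + of_bool (f32 = 1) + of_bool (g = 1) \<le> (3::int)"
      "of_bool (f12 = -1) + of_bool (f22 = -1) + of_bool (f32 = -1) + of_bool (g = -1) \<le> (1::int)"
    and "a = e12 + e13 - f11 - f12" "a = e12 + e23 - f21 - f22" "a = e13 + e23 - f31 - f32"
      "b = f11 + f21 + f31 - g" "b = f12 + f22 + f32 - g"
    and "\<bar>e12\<bar> + \<bar>e13\<bar> - \<bar>f11\<bar> - \<bar>f12\<bar> = e12 + e13 + f11 + f12"
      "\<bar>e12\<bar> + \<bar>e23\<bar> - \<bar>f21\<bar> - \<bar>f22\<bar> = e12 + e23 + f21 + f22"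
      "\<bar>e13\<bar> + \<bar>e23\<bar> - \<bar>f31\<bar> - \<bar>f32\<bar> = e13 + e23 + f31 + f32"
      "\<bar>f11\<bar> + \<bar>f21\<bar> + \<bar>f31\<bar> - \<bar>g\<bar> = f11 + f21 + f31 + g"
      "\<bar>f12\<bar> + \<bar>f22\<bar> + \<bar>f32\<bar> - \<bar>g\<bar> = f12 + f22 + f32 + g"
  shows "a = -4
    \<or> (a = 2 \<and> b = -2 \<and> e12 + e13 + e23 = 2 \<and> \<bar>e12\<bar> + \<bar>e13\<bar> + \<bar>e23\<bar> = 2)
    \<or> (a \<in> {0, 2} \<and> b \<in> {0, 1} \<and> 2 * e12 = a \<and> 2 * e13 = a \<and> 2 * e23 = a
        \<and> f11 = 0 \<and> f12 = 0 \<and> f21 = 0 \<and> f22 = 0 \<and> f31 = 0 \<and> f32 = 0 \<and> g = -b)"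
  using assms unfolding of_bool_def abs_if insert_iff singleton_iff by (smt (z3))

locale srsg5_net1 =
  fixes V :: "'a set" and s :: "'a \<Rightarrow> 'a \<Rightarrow> int" and a b c :: int
  assumes signed: "signed_graph V s"
    and conds: "srsg_conds V s 5 a b c"
    and regular: "sg_regular V s 5"
    and net_regular: "net_regular V s 1"
begin

lemma finite_V: "finite V"
  using signed by (simp add: signed_graph_def)

lemma s_cases: "s u v = 1 \<or> s u v = 0 \<or> s u v = -1"
  using signed by (auto simp: signed_graph_def)

lemma s_sym: "s u v = s v u"
  using signed by (simp add: signed_graph_def)

lemma s_diag [simp]: "s u u = 0"
  using signed by (simp add: signed_graph_def)

lemma in_V_if_s_nonzero: "s u v \<noteq> 0 \<Longrightarrow> u \<in> V \<and> v \<in> V"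
  using signed unfolding signed_graph_def by blast

lemma abs_s_le_1: "\<bar>s u v\<bar> \<le> 1"
  using s_cases[of u v] by auto

definition pos_nbrs :: "'a \<Rightarrow> 'a set" where "pos_nbrs x = {w \<in> V. s x w = 1}"
definition neg_nbrs :: "'a \<Rightarrow> 'a set" where "neg_nbrs x = {w \<in> V. s x w = -1}"
definition nbrs :: "'a \<Rightarrow> 'a set" where "nbrs x = {w \<in> V. s x w \<noteq> 0}"

lemma mem_pos_nbrs_iff: "w \<in> pos_nbrs x \<longleftrightarrow> s x w = 1"
  using in_V_if_s_nonzero[of x w] by (auto simp: pos_nbrs_def)

lemma mem_neg_nbrs_iff: "w \<in> neg_nbrs x \<longleftrightarrow> s x w = -1"
  using in_V_if_s_nonzero[of x w] by (auto simp: neg_nbrs_def)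

lemma mem_nbrs_iff: "w \<in> nbrs x \<longleftrightarrow> s x w \<noteq> 0"
  using in_V_if_s_nonzero[of x w] by (auto simp: nbrs_def)

lemma card_nbrs: "x \<in> V \<Longrightarrow> card (nbrs x) = 5"
  using regular by (simp add: sg_regular_def sg_degree_def nbrs_def)

lemma card_pos_nbrs_neg_nbrs:
  assumes "x \<in> V"
  shows "card (pos_nbrs x) = 3" "card (neg_nbrs x) = 2"
proof -
  have "nbrs x = pos_nbrs x \<union> neg_nbrs x"
    using s_cases by (auto simp: nbrs_def pos_nbrs_def neg_nbrs_def)
  then have "card (pos_nbrs x) + card (neg_nbrs x) = 5"
    using card_nbrs[OF assms] finite_V
    by (simp add: card_Un_disjoint pos_nbrs_def neg_nbrs_def disjoint_iff)
  moreover have "int (card (pos_nbrs x)) - int (card (neg_nbrs x)) = 1"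
    using net_regular assms by (simp add: net_regular_def net_degree_def pos_nbrs_def neg_nbrs_def)
  ultimately show "card (pos_nbrs x) = 3" "card (neg_nbrs x) = 2" by linarith+
qed

lemma sum_s_mult:
  "(\<Sum>w\<in>V. s x w * f w) = (\<Sum>w\<in>pos_nbrs x. f w) - (\<Sum>w\<in>neg_nbrs x. f w)"
proof -
  have "s x w * f w = of_bool (s x w = 1) * f w - of_bool (s x w = -1) * f w" for w
    using s_cases[of x w] by auto
  then have "(\<Sum>w\<in>V. s x w * f w) = (\<Sum>w\<in>V. of_bool (s x w = 1) * f w) - (\<Sum>w\<in>V. of_bool (s x w = -1) * f w)"
    by (simp add: sum_subtractf)
  then show ?thesis
    by (simp add: finite_V pos_nbrs_def neg_nbrs_def Collect_conj_eq)
qed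

lemma sum_abs_s_mult:
  "(\<Sum>w\<in>V. \<bar>s x w\<bar> * f w) = (\<Sum>w\<in>pos_nbrs x. f w) + (\<Sum>w\<in>neg_nbrs x. f w)"
proof -
  have "\<bar>s x w\<bar> * f w = of_bool (s x w = 1) * f w + of_bool (s x w = -1) * f w" for w
    using s_cases[of x w] by auto
  then have "(\<Sum>w\<in>V. \<bar>s x w\<bar> * f w) = (\<Sum>w\<in>V. of_bool (s x w = 1) * f w) + (\<Sum>w\<in>V. of_bool (s x w = -1) * f w)"
    by (simp add: sum.distrib)
  then show ?thesis
    by (simp add: finite_V pos_nbrs_def neg_nbrs_def Collect_conj_eq)
qed

lemma row_sum: "x \<in> V \<Longrightarrow> (\<Sum>w\<in>V. s x w) = 1"
  using sum_s_mult[of x "\<lambda>_. 1"] card_pos_nbrs_neg_nbrs[of x] by simp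

lemma column_sum: "u \<in> V \<Longrightarrow> (\<Sum>w\<in>V. s w u) = 1"
  using row_sum by (simp add: s_sym[of _ u])

lemma sum_row_nbrs: "(\<Sum>w\<in>V. s z w) = (\<Sum>w\<in>nbrs z. s z w)"
  by (rule sum.mono_neutral_right[OF finite_V]) (auto simp: nbrs_def)

lemma row_abs_sum: "x \<in> V \<Longrightarrow> (\<Sum>w\<in>V. \<bar>s x w\<bar>) = 5"
  using sum_abs_s_mult[of x "\<lambda>_. 1"] card_pos_nbrs_neg_nbrs[of x] by simp

lemma adj_sq_eq:
  assumes "x \<in> V" "u \<in> V"
  shows "adj_sq V s x u = (if x = u then 5 else if s x u = 1 then a else if s x u = -1 then b else c)"
  using conds assms s_cases[of x u] by (auto simp: srsg_conds_def)

lemma s_eq_of_bool: "s u v = of_bool (s u v = 1) - of_bool (s u v = -1)"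
  and abs_s_eq_of_bool: "\<bar>s u v\<bar> = of_bool (s u v = 1) + of_bool (s u v = -1)"
  using s_cases[of u v] by auto

lemma pos_nbrs_eq:
  assumes "s y u1 = 1" "s y u2 = 1" "s y u3 = 1" "distinct [u1, u2, u3]"
  shows "pos_nbrs y = {u1, u2, u3}"
proof -
  have y: "y \<in> V" using assms(1) in_V_if_s_nonzero[of y u1] by simp
  have "{u1, u2, u3} \<subseteq> pos_nbrs y" using assms by (simp add: mem_pos_nbrs_iff)
  moreover have "finite (pos_nbrs y)" using finite_V by (simp add: pos_nbrs_def)
  moreover have "card {u1, u2, u3} = card (pos_nbrs y)"
    using card_pos_nbrs_neg_nbrs(1)[OF y] assms(4) by simp
  ultimately show ?thesis by (metis card_subset_eq)
qed

lemma neg_nbrs_eq: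
  assumes "s y u1 = -1" "s y u2 = -1" "u1 \<noteq> u2"
  shows "neg_nbrs y = {u1, u2}"
proof -
  have y: "y \<in> V" using assms(1) in_V_if_s_nonzero[of y u1] by simp
  have "{u1, u2} \<subseteq> neg_nbrs y" using assms by (simp add: mem_neg_nbrs_iff)
  moreover have "finite (neg_nbrs y)" using finite_V by (simp add: neg_nbrs_def)
  moreover have "card {u1, u2} = card (neg_nbrs y)"
    using card_pos_nbrs_neg_nbrs(2)[OF y] assms(3) by simp
  ultimately show ?thesis by (metis card_subset_eq)
qed

lemma pos_nbr_avoiding:
  assumes "y \<in> V" obtains z where "s y z = 1" "z \<noteq> w1" "z \<noteq> w2"
proof -
  have "\<not> pos_nbrs y \<subseteq> {w1, w2}"
  proof
    assume "pos_nbrs y \<subseteq> {w1, w2}"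
    then have "card (pos_nbrs y) \<le> card {w1, w2}" by (rule card_mono[rotated]) simp
    also have "\<dots> \<le> 2" by (simp add: card_insert_if)
    finally show False using card_pos_nbrs_neg_nbrs(1)[OF assms] by simp
  qed
  then obtain z where "z \<in> pos_nbrs y" "z \<notin> {w1, w2}" by blast
  then show ?thesis using that by (simp add: mem_pos_nbrs_iff)
qed

lemma neg_nbr_avoiding:
  assumes "y \<in> V" obtains z where "s y z = -1" "z \<noteq> w"
proof -
  have "\<not> neg_nbrs y \<subseteq> {w}"
  proof
    assume "neg_nbrs y \<subseteq> {w}"
    then have "card (neg_nbrs y) \<le> card {w}" by (rule card_mono[rotated]) simp
    then show False using card_pos_nbrs_neg_nbrs(2)[OF assms] by simp
  qed
  then obtain z where "z \<in> neg_nbrs y" "z \<noteq> w" by blast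
  then show ?thesis using that by (simp add: mem_neg_nbrs_iff)
qed

text \<open>Since \<open>A\<^sup>+ = (\<bar>A\<bar> + A)/2\<close> and \<open>A\<^sup>- = (\<bar>A\<bar> - A)/2\<close>, the defining conditions say
  \<open>2 A\<^sup>2 = 2c J + 2(5 - c) I + (a - b) A + (a + b - 2c) \<bar>A\<bar>\<close>.\<close>
lemma adj_sq_decomp:
  assumes "x \<in> V" "u \<in> V"
  shows "2 * adj_sq V s x u = 2 * c + 2 * (5 - c) * of_bool (x = u) + (a - b) * s x u + (a + b - 2 * c) * \<bar>s x u\<bar>"
  using adj_sq_eq[OF assms] s_cases[of x u] by auto

lemma row_identity: "x \<in> V \<Longrightarrow> 3 * a + 2 * b + c * (int (card V) - 6) = -4"
proof -
  assume x: "x \<in> V"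
  have "(\<Sum>u\<in>V. adj_sq V s x u) = (\<Sum>w\<in>V. s x w * (\<Sum>u\<in>V. s w u))"
    unfolding adj_sq_def by (subst sum.swap) (simp add: sum_distrib_left)
  also have "\<dots> = 1"
    using row_sum[OF x] by (simp add: row_sum in_V_if_s_nonzero cong: sum.cong)
  finally have "2 = (\<Sum>u\<in>V. 2 * adj_sq V s x u)"
    by (simp add: sum_distrib_left[symmetric])
  also have "\<dots> = (\<Sum>u\<in>V. 2 * c + 2 * (5 - c) * of_bool (x = u) + (a - b) * s x u + (a + b - 2 * c) * \<bar>s x u\<bar>)"
    by (simp add: adj_sq_decomp x)
  also have "\<dots> = 2 * c * int (card V) + 2 * (5 - c) + (a - b) * (\<Sum>u\<in>V. s x u) + (a + b - 2 * c) * (\<Sum>u\<in>V. \<bar>s x u\<bar>)"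
    using x finite_V by (simp add: sum.distrib sum_distrib_left Int_absorb1)
  finally show ?thesis
    using row_sum[OF x] row_abs_sum[OF x] by (simp add: algebra_simps)
qed

lemma s_mult_adj_sq:
  assumes x: "x \<in> V" and u: "u \<in> V"
  shows "2 * (\<Sum>w\<in>V. s x w * adj_sq V s w u) = 2 * c + 2 * (5 - c) * s x u + (a - b) * adj_sq V s x u
    + (a + b - 2 * c) * (\<Sum>w\<in>V. s x w * \<bar>s w u\<bar>)"
proof -
  have delta: "(\<Sum>w\<in>V. k * (s x w * of_bool (w = u))) = k * s x u" for k
    using u finite_V by (simp add: sum_distrib_left[symmetric] Int_absorb1)
  have "2 * (\<Sum>w\<in>V. s x w * adj_sq V s w u)
      = (\<Sum>w\<in>V. s x w * (2 * c + 2 * (5 - c) * of_bool (w = u) + (a - b) * s w u + (a + b - 2 * c) * \<bar>s w u\<bar>))"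
    unfolding sum_distrib_left
    by (rule sum.cong) (use adj_sq_decomp[OF _ u] in \<open>auto simp: mult.left_commute\<close>)
  also have "\<dots> = (\<Sum>w\<in>V. 2 * c * s x w + 2 * (5 - c) * (s x w * of_bool (w = u))
      + (a - b) * (s x w * s w u) + (a + b - 2 * c) * (s x w * \<bar>s w u\<bar>))"
    by (rule sum.cong) (simp_all add: algebra_simps)
  also have "\<dots> = 2 * c * (\<Sum>w\<in>V. s x w) + 2 * (5 - c) * s x u + (a - b) * adj_sq V s x u
      + (a + b - 2 * c) * (\<Sum>w\<in>V. s x w * \<bar>s w u\<bar>)"
    by (simp add: adj_sq_def sum.distrib sum_distrib_left delta)
  finally show ?thesis using row_sum[OF x] by simp
qed

lemma adj_sq_mult_s:
  assumes x: "x \<in> V" and u: "u \<in> V"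
  shows "2 * (\<Sum>w\<in>V. adj_sq V s x w * s w u) = 2 * c + 2 * (5 - c) * s x u + (a - b) * adj_sq V s x u
    + (a + b - 2 * c) * (\<Sum>w\<in>V. \<bar>s x w\<bar> * s w u)"
proof -
  have delta: "(\<Sum>w\<in>V. k * (of_bool (x = w) * s w u)) = k * s x u" for k
    using x finite_V by (simp add: sum_distrib_left[symmetric] Int_absorb1)
  have "2 * (\<Sum>w\<in>V. adj_sq V s x w * s w u)
      = (\<Sum>w\<in>V. (2 * c + 2 * (5 - c) * of_bool (x = w) + (a - b) * s x w + (a + b - 2 * c) * \<bar>s x w\<bar>) * s w u)"
    unfolding sum_distrib_left
    by (rule sum.cong) (use adj_sq_decomp[OF x] in \<open>auto simp: mult.assoc[symmetric]\<close>)
  also have "\<dots> = (\<Sum>w\<in>V. 2 * c * s w u + 2 * (5 - c) * (of_bool (x = w) * s w u)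
      + (a - b) * (s x w * s w u) + (a + b - 2 * c) * (\<bar>s x w\<bar> * s w u))"
    by (rule sum.cong) (simp_all add: algebra_simps)
  also have "\<dots> = 2 * c * (\<Sum>w\<in>V. s w u) + 2 * (5 - c) * s x u + (a - b) * adj_sq V s x u
      + (a + b - 2 * c) * (\<Sum>w\<in>V. \<bar>s x w\<bar> * s w u)"
    by (simp add: adj_sq_def sum.distrib sum_distrib_left delta)
  finally show ?thesis using column_sum[OF u] by simp
qed

text \<open>As \<open>A\<close> commutes with \<open>A\<^sup>2\<close>, \<open>I\<close> and \<open>J\<close> (the latter because all row sums are 1), the
  decomposition of \<open>A\<^sup>2\<close> shows that \<open>A\<close> commutes with \<open>\<bar>A\<bar>\<close> unless \<open>a + b = 2c\<close>.\<close>
lemma s_commutes_abs_s: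
  assumes ne: "a + b \<noteq> 2 * c" and x: "x \<in> V" and u: "u \<in> V"
  shows "(\<Sum>w\<in>V. s x w * \<bar>s w u\<bar>) = (\<Sum>w\<in>V. \<bar>s x w\<bar> * s w u)"
proof -
  from s_mult_adj_sq[OF x u] adj_sq_mult_s[OF x u] adj_sq_assoc[OF finite_V, of s x u]
  have "(a + b - 2 * c) * ((\<Sum>w\<in>V. s x w * \<bar>s w u\<bar>) - (\<Sum>w\<in>V. \<bar>s x w\<bar> * s w u)) = 0"
    by (simp add: algebra_simps)
  with ne show ?thesis by simp
qed

lemma count_pos_le: "y \<in> V \<Longrightarrow> distinct ws \<Longrightarrow> (\<Sum>w\<leftarrow>ws. of_bool (s y w = 1)) \<le> (3::int)"
proof -
  assume y: "y \<in> V" and ws: "distinct ws"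
  have "set ws \<inter> {w. s y w = 1} \<subseteq> pos_nbrs y" by (auto simp: mem_pos_nbrs_iff)
  then have "card (set ws \<inter> {w. s y w = 1}) \<le> 3"
    using card_mono[of "pos_nbrs y"] finite_V card_pos_nbrs_neg_nbrs(1)[OF y] by (force simp: pos_nbrs_def)
  then show ?thesis using ws by (simp add: sum_list_distinct_conv_sum_set)
qed

lemma count_neg_le: "y \<in> V \<Longrightarrow> distinct ws \<Longrightarrow> (\<Sum>w\<leftarrow>ws. of_bool (s y w = -1)) \<le> (2::int)"
proof -
  assume y: "y \<in> V" and ws: "distinct ws"
  have "set ws \<inter> {w. s y w = -1} \<subseteq> neg_nbrs y" by (auto simp: mem_neg_nbrs_iff)
  then have "card (set ws \<inter> {w. s y w = -1}) \<le> 2"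
    using card_mono[of "neg_nbrs y"] finite_V card_pos_nbrs_neg_nbrs(2)[OF y] by (force simp: neg_nbrs_def)
  then show ?thesis using ws by (simp add: sum_list_distinct_conv_sum_set)
qed

definition nbhd_frame :: "'a \<Rightarrow> 'a \<Rightarrow> 'a \<Rightarrow> 'a \<Rightarrow> 'a \<Rightarrow> 'a \<Rightarrow> bool" where
  "nbhd_frame x p1 p2 p3 q1 q2 \<longleftrightarrow> x \<in> V \<and> pos_nbrs x = {p1, p2, p3} \<and> neg_nbrs x = {q1, q2}
     \<and> distinct [x, p1, p2, p3, q1, q2]"

lemma nbhd_frame_exists:
  assumes x: "x \<in> V"
  obtains p1 p2 p3 q1 q2 where "nbhd_frame x p1 p2 p3 q1 q2"
proof -
  obtain p1 p2 p3 where P: "pos_nbrs x = {p1, p2, p3}" "distinct [p1, p2, p3]"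
    using card_pos_nbrs_neg_nbrs(1)[OF x] card_3_iff by (metis distinct_length_2_or_more distinct_singleton)
  obtain q1 q2 where Q: "neg_nbrs x = {q1, q2}" "q1 \<noteq> q2"
    using card_pos_nbrs_neg_nbrs(2)[OF x] card_2_iff by metis
  have "x \<notin> pos_nbrs x \<union> neg_nbrs x" "pos_nbrs x \<inter> neg_nbrs x = {}"
    by (auto simp: pos_nbrs_def neg_nbrs_def)
  with P Q x have "nbhd_frame x p1 p2 p3 q1 q2" by (auto simp: nbhd_frame_def)
  then show ?thesis by (rule that)
qed

context
  fixes x p1 p2 p3 q1 q2
  assumes frame: "nbhd_frame x p1 p2 p3 q1 q2"
begin

lemma frame_distinct: "distinct [x, p1, p2, p3, q1, q2]"
  using frame by (simp add: nbhd_frame_def)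

lemma frame_pos_nbrs: "pos_nbrs x = {p1, p2, p3}"
  using frame by (simp add: nbhd_frame_def)

lemma frame_neg_nbrs: "neg_nbrs x = {q1, q2}"
  using frame by (simp add: nbhd_frame_def)

lemma frame_pos_iff: "s x w = 1 \<longleftrightarrow> w \<in> {p1, p2, p3}"
  using mem_pos_nbrs_iff[of w x] by (simp add: frame_pos_nbrs)

lemma frame_neg_iff: "s x w = -1 \<longleftrightarrow> w \<in> {q1, q2}"
  using mem_neg_nbrs_iff[of w x] by (simp add: frame_neg_nbrs)

lemma frame_zero_iff: "s x w = 0 \<longleftrightarrow> w \<notin> {p1, p2, p3, q1, q2}"
  using frame_pos_iff[of w] frame_neg_iff[of w] s_cases[of x w] by auto

lemma frame_signs:
  "s x p1 = 1" "s x p2 = 1" "s x p3 = 1" "s x q1 = -1" "s x q2 = -1"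
  "s p1 x = 1" "s p2 x = 1" "s p3 x = 1" "s q1 x = -1" "s q2 x = -1"
  using frame_pos_iff frame_neg_iff s_sym by auto

lemma frame_in_V: "x \<in> V" "p1 \<in> V" "p2 \<in> V" "p3 \<in> V" "q1 \<in> V" "q2 \<in> V"
  using frame_signs(1-5) in_V_if_s_nonzero[of x p1] in_V_if_s_nonzero[of x p2]
    in_V_if_s_nonzero[of x p3] in_V_if_s_nonzero[of x q1] in_V_if_s_nonzero[of x q2]
  by simp_all

lemma frame_nbrs: "nbrs x = {p1, p2, p3, q1, q2}"
  by (rule set_eqI) (simp add: mem_nbrs_iff frame_zero_iff)

lemma frame_adj_sq: "adj_sq V s x u = s p1 u + s p2 u + s p3 u - s q1 u - s q2 u"
proof -
  have "adj_sq V s x u = (\<Sum>w\<in>pos_nbrs x. s w u) - (\<Sum>w\<in>neg_nbrs x. s w u)"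
    unfolding adj_sq_def by (rule sum_s_mult)
  then show ?thesis
    using frame_distinct by (simp add: frame_pos_nbrs frame_neg_nbrs)
qed

lemma frame_commute:
  assumes "a + b \<noteq> 2 * c" "u \<in> V"
  shows "\<bar>s p1 u\<bar> + \<bar>s p2 u\<bar> + \<bar>s p3 u\<bar> - \<bar>s q1 u\<bar> - \<bar>s q2 u\<bar> = s p1 u + s p2 u + s p3 u + s q1 u + s q2 u"
  using s_commutes_abs_s[OF assms(1) frame_in_V(1) assms(2)] frame_distinct
  unfolding sum_s_mult sum_abs_s_mult by (simp add: frame_pos_nbrs frame_neg_nbrs)

lemma frame_adj_sq_values:
  "a = s p1 p2 + s p1 p3 - s p1 q1 - s p1 q2" "a = s p1 p2 + s p2 p3 - s p2 q1 - s p2 q2"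
  "a = s p1 p3 + s p2 p3 - s p3 q1 - s p3 q2"
  "b = s p1 q1 + s p2 q1 + s p3 q1 - s q1 q2" "b = s p1 q2 + s p2 q2 + s p3 q2 - s q1 q2"
proof -
  have "adj_sq V s x p1 = a" "adj_sq V s x p2 = a" "adj_sq V s x p3 = a"
    "adj_sq V s x q1 = b" "adj_sq V s x q2 = b"
    using adj_sq_eq[OF frame_in_V(1)] frame_in_V frame_signs frame_distinct by simp_all
  then show "a = s p1 p2 + s p1 p3 - s p1 q1 - s p1 q2" "a = s p1 p2 + s p2 p3 - s p2 q1 - s p2 q2"
    "a = s p1 p3 + s p2 p3 - s p3 q1 - s p3 q2"
    "b = s p1 q1 + s p2 q1 + s p3 q1 - s q1 q2" "b = s p1 q2 + s p2 q2 + s p3 q2 - s q1 q2"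
    unfolding frame_adj_sq
    by (simp_all add: s_sym[of p2 p1] s_sym[of p3 p1] s_sym[of p3 p2] s_sym[of q1 p1] s_sym[of q2 p1]
      s_sym[of q1 p2] s_sym[of q2 p2] s_sym[of q1 p3] s_sym[of q2 p3] s_sym[of q2 q1])
qed

lemma frame_far_vertex:
  assumes u: "u \<in> V" "u \<notin> {x, p1, p2, p3, q1, q2}"
  shows "c = s p1 u + s p2 u + s p3 u - s q1 u - s q2 u"
proof -
  have "x \<noteq> u" "s x u = 0" using u(2) frame_zero_iff[of u] by auto
  then show ?thesis
    using adj_sq_eq[OF frame_in_V(1) u(1)] by (simp add: frame_adj_sq)
qed

end

lemma local_configuration:
  assumes ne: "a + b \<noteq> 2 * c" and frame: "nbhd_frame x p1 p2 p3 q1 q2"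
  shows "a = -4
    \<or> (a = 2 \<and> b = -2 \<and> s p1 p2 + s p1 p3 + s p2 p3 = 2 \<and> \<bar>s p1 p2\<bar> + \<bar>s p1 p3\<bar> + \<bar>s p2 p3\<bar> = 2)
    \<or> (a \<in> {0, 2} \<and> b \<in> {0, 1} \<and> 2 * s p1 p2 = a \<and> 2 * s p1 p3 = a \<and> 2 * s p2 p3 = a
        \<and> s p1 q1 = 0 \<and> s p1 q2 = 0 \<and> s p2 q1 = 0 \<and> s p2 q2 = 0 \<and> s p3 q1 = 0 \<and> s p3 q2 = 0
        \<and> s q1 q2 = -b)"
proof -
  note in_V = frame_in_V[OF frame] and signs = frame_signs[OF frame]
  have D: "distinct [x, p2, p3, q1, q2]" "distinct [x, p1, p3, q1, q2]" "distinct [x, p1, p2, q1, q2]"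
    "distinct [x, p1, p2, p3, q2]" "distinct [x, p1, p2, p3, q1]"
    using frame_distinct[OF frame] by auto
  note pos = count_pos_le[OF in_V(2) D(1)] count_pos_le[OF in_V(3) D(2)] count_pos_le[OF in_V(4) D(3)]
    count_pos_le[OF in_V(5) D(4)] count_pos_le[OF in_V(6) D(5)]
  note neg = count_neg_le[OF in_V(2) D(1)] count_neg_le[OF in_V(3) D(2)] count_neg_le[OF in_V(4) D(3)]
    count_neg_le[OF in_V(5) D(4)] count_neg_le[OF in_V(6) D(5)]
  note comm = frame_commute[OF frame ne in_V(2)] frame_commute[OF frame ne in_V(3)]
    frame_commute[OF frame ne in_V(4)] frame_commute[OF frame ne in_V(5)] frame_commute[OF frame ne in_V(6)]
  note sym = s_sym[of p2 p1] s_sym[of p3 p1] s_sym[of p3 p2] s_sym[of q1 p1] s_sym[of q2 p1]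
    s_sym[of q1 p2] s_sym[of q2 p2] s_sym[of q1 p3] s_sym[of q2 p3] s_sym[of q2 q1]
  show ?thesis
    by (rule local_sign_patterns[OF abs_s_le_1 abs_s_le_1 abs_s_le_1 abs_s_le_1 abs_s_le_1
      abs_s_le_1 abs_s_le_1 abs_s_le_1 abs_s_le_1 abs_s_le_1 _ _ _ _ _ _ _ _ _ _ frame_adj_sq_values[OF frame]])
      (use pos neg comm in \<open>simp_all add: signs sym\<close>)
qed

lemma frame_signs_if_uniform:
  assumes ne: "a + b \<noteq> 2 * c" and ab: "a \<in> {0, 2}" "b \<in> {0, 1}"
    and frame: "nbhd_frame x p1 p2 p3 q1 q2"
  shows "2 * s p1 p2 = a" "2 * s p1 p3 = a" "2 * s p2 p3 = a" "s p1 q1 = 0" "s p1 q2 = 0"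
    "s p2 q1 = 0" "s p2 q2 = 0" "s p3 q1 = 0" "s p3 q2 = 0" "s q1 q2 = -b"
  using local_configuration[OF ne frame] ab by auto

lemma card_V_ge_6: "x \<in> V \<Longrightarrow> card V \<ge> 6"
proof -
  assume "x \<in> V"
  then obtain p1 p2 p3 q1 q2 where frame: "nbhd_frame x p1 p2 p3 q1 q2"
    by (rule nbhd_frame_exists)
  have "{x, p1, p2, p3, q1, q2} \<subseteq> V" using frame_in_V[OF frame] by simp
  from card_mono[OF finite_V this] show ?thesis
    using frame_distinct[OF frame] by simp
qed

lemma card_V_ge_7_if_not_complete: "\<not> sg_complete V s \<Longrightarrow> card V \<ge> 7"
proof -
  assume "\<not> sg_complete V s"
  then obtain u v where uv: "u \<in> V" "v \<in> V" "u \<noteq> v" "s u v = 0"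
    by (auto simp: sg_complete_def)
  then have "v \<notin> nbrs u" "u \<notin> nbrs u" by (simp_all add: mem_nbrs_iff)
  with uv have "card (insert v (insert u (nbrs u))) = 7"
    using card_nbrs[OF uv(1)] finite_V by (simp add: nbrs_def)
  moreover have "insert v (insert u (nbrs u)) \<subseteq> V" using uv by (auto simp: nbrs_def)
  ultimately show ?thesis using card_mono[OF finite_V] by metis
qed

lemma frame_signs_if_a_eq_minus4:
  assumes a: "a = -4" and frame: "nbhd_frame x p1 p2 p3 q1 q2"
  shows "s p1 p2 = -1" "s p1 p3 = -1" "s p2 p3 = -1" "s p1 q1 = 1" "s p1 q2 = 1"
    "s p2 q1 = 1" "s p2 q2 = 1" "s p3 q1 = 1" "s p3 q2 = 1"
proof -
  have bounds: "-1 \<le> s u v \<and> s u v \<le> 1" for u v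
    using abs_s_le_1[of u v] by (simp add: abs_le_iff)
  note eqs = frame_adj_sq_values[OF frame, unfolded a]
  show "s p1 p2 = -1" "s p1 p3 = -1" "s p1 q1 = 1" "s p1 q2 = 1"
    using eqs(1) bounds[of p1 p2] bounds[of p1 p3] bounds[of p1 q1] bounds[of p1 q2] by linarith+
  show "s p2 p3 = -1" "s p2 q1 = 1" "s p2 q2 = 1"
    using eqs(2) bounds[of p1 p2] bounds[of p2 p3] bounds[of p2 q1] bounds[of p2 q2] by linarith+
  show "s p3 q1 = 1" "s p3 q2 = 1"
    using eqs(3) bounds[of p1 p3] bounds[of p2 p3] bounds[of p3 q1] bounds[of p3 q2] by linarith+
qed

lemma signs_if_a_eq_minus4:
  assumes a: "a = -4"
  shows pos_pos_if_a_eq_minus4: "s y u = 1 \<Longrightarrow> s y w = 1 \<Longrightarrow> u \<noteq> w \<Longrightarrow> s u w = -1"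
    and pos_neg_if_a_eq_minus4: "s y u = 1 \<Longrightarrow> s y w = -1 \<Longrightarrow> s u w = 1"
    and neg_neg_if_a_eq_minus4: "s y u = -1 \<Longrightarrow> s y w = -1 \<Longrightarrow> u \<noteq> w \<Longrightarrow> s u w = -1"
proof -
  have frame_values: "(s y u = 1 \<longrightarrow> s y w = 1 \<longrightarrow> u \<noteq> w \<longrightarrow> s u w = -1) \<and> (s y u = 1 \<longrightarrow> s y w = -1 \<longrightarrow> s u w = 1)"
    if y: "y \<in> V" for y u w
  proof -
    obtain p1 p2 p3 q1 q2 where frame: "nbhd_frame y p1 p2 p3 q1 q2"
      using y by (rule nbhd_frame_exists)
    show ?thesis
      using frame_signs_if_a_eq_minus4[OF a frame] frame_pos_iff[OF frame, of u] frame_pos_iff[OF frame, of w]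
        frame_neg_iff[OF frame, of w]
      by (auto simp: s_sym[of _ p1] s_sym[of p3 p2])
  qed
  show pos_pos: "s y u = 1 \<Longrightarrow> s y w = 1 \<Longrightarrow> u \<noteq> w \<Longrightarrow> s u w = -1" for y u w
    using frame_values[of y u w] in_V_if_s_nonzero[of y u] by simp
  show pos_neg: "s y u = 1 \<Longrightarrow> s y w = -1 \<Longrightarrow> s u w = 1" for y u w
    using frame_values[of y u w] in_V_if_s_nonzero[of y u] by simp
  show "s y u = -1 \<Longrightarrow> s y w = -1 \<Longrightarrow> u \<noteq> w \<Longrightarrow> s u w = -1"
  proof -
    assume uw: "s y u = -1" "s y w = -1" "u \<noteq> w"
    then have "y \<in> V" using in_V_if_s_nonzero[of y u] by simp
    then have "pos_nbrs y \<noteq> {}" using card_pos_nbrs_neg_nbrs(1)[of y] by auto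
    then obtain p where "s y p = 1" by (auto simp: pos_nbrs_def)
    with uw have "s p u = 1" "s p w = 1" using pos_neg by blast+
    with uw(3) show "s u w = -1" using pos_pos by blast
  qed
qed

definition cnbrs :: "'a \<Rightarrow> 'a set" where "cnbrs y = insert y (nbrs y)"

lemma card_cnbrs: "y \<in> V \<Longrightarrow> card (cnbrs y) = 6"
  using card_nbrs[of y] finite_V by (simp add: cnbrs_def mem_nbrs_iff nbrs_def)

lemma cnbrs_signs_if_a_eq_minus4:
  assumes a: "a = -4" and uv: "u \<in> cnbrs x" "v \<in> cnbrs x" "u \<noteq> v"
  shows "s u v = (if (u = x \<or> s x u = -1) = (v = x \<or> s x v = -1) then -1 else 1)"
proof -
  have "u = x \<or> s x u = 1 \<or> s x u = -1" "v = x \<or> s x v = 1 \<or> s x v = -1"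
    using uv(1,2) s_cases[of x u] s_cases[of x v] by (auto simp: cnbrs_def mem_nbrs_iff)
  then show ?thesis
    using uv(3) pos_pos_if_a_eq_minus4[OF a, of x u v] pos_neg_if_a_eq_minus4[OF a, of x u v]
      pos_neg_if_a_eq_minus4[OF a, of x v u] neg_neg_if_a_eq_minus4[OF a, of x u v]
    by (auto simp: s_sym[of v u] s_sym[of v x] s_sym[of u x])
qed

lemma cnbrs_clique_if_a_eq_minus4:
  assumes a: "a = -4" and uw: "u \<in> cnbrs y" "w \<in> cnbrs y" "u \<noteq> w"
  shows "s u w \<noteq> 0"
  using cnbrs_signs_if_a_eq_minus4[OF a uw] by simp

lemma cnbrs_eq_if_adjacent_if_a_eq_minus4:
  assumes a: "a = -4" and yw: "s y w \<noteq> 0"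
  shows "cnbrs w = cnbrs y"
proof -
  have in_V: "y \<in> V" "w \<in> V" using in_V_if_s_nonzero[OF yw] by auto
  have w: "w \<in> cnbrs y" using yw by (simp add: cnbrs_def mem_nbrs_iff)
  have "u \<in> cnbrs w" if u: "u \<in> cnbrs y" for u
  proof (cases "u = w")
    case False
    then have "s w u \<noteq> 0" using cnbrs_clique_if_a_eq_minus4[OF a w u] by blast
    then show ?thesis by (simp add: cnbrs_def mem_nbrs_iff)
  qed (simp add: cnbrs_def)
  moreover have "finite (cnbrs w)" using finite_V by (simp add: cnbrs_def nbrs_def)
  ultimately show ?thesis
    using card_subset_eq card_cnbrs in_V by (metis subsetI)
qed

lemma complete_if_a_eq_minus4:
  assumes a: "a = -4" and connected: "sg_connected V s"
  shows "sg_complete V s"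
proof -
  obtain x where x: "x \<in> V" using connected by (auto simp: sg_connected_def)
  have "cnbrs u = cnbrs x" if "(\<lambda>x y. s x y \<noteq> 0)\<^sup>*\<^sup>* x u" for u
    using that
  proof induction
    case (step y z)
    then show ?case using cnbrs_eq_if_adjacent_if_a_eq_minus4[OF a] by simp
  qed simp
  then have "u \<in> cnbrs x" if "u \<in> V" for u
    using connected x that unfolding sg_connected_def by (metis cnbrs_def insertI1)
  then show ?thesis
    using cnbrs_clique_if_a_eq_minus4[OF a, of _ x] by (simp add: sg_complete_def)
qed

lemma b_bounds: "x \<in> V \<Longrightarrow> -2 \<le> b \<and> b \<le> 4"
proof -
  assume "x \<in> V"
  then obtain p1 p2 p3 q1 q2 where frame: "nbhd_frame x p1 p2 p3 q1 q2"
    by (rule nbhd_frame_exists)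
  have "distinct [x, p1, p2, p3, q2]" using frame_distinct[OF frame] by auto
  from count_neg_le[OF frame_in_V(5)[OF frame] this]
  have "of_bool (s p1 q1 = -1) + of_bool (s p2 q1 = -1) + of_bool (s p3 q1 = -1) + of_bool (s q1 q2 = -1) \<le> (1::int)"
    using frame_signs[OF frame] by (simp add: s_sym[of q1])
  then show ?thesis
    using frame_adj_sq_values(4)[OF frame] s_cases[of p1 q1] s_cases[of p2 q1] s_cases[of p3 q1] s_cases[of q1 q2]
    by auto
qed

lemma a_eq_minus4_if_a_plus_b_eq:
  assumes eq: "a + b = 2 * c" and not_complete: "\<not> sg_complete V s"
  shows "a = -4"
proof -
  define n where "n = int (card V)"
  have n: "n \<ge> 7" using card_V_ge_7_if_not_complete[OF not_complete] by (simp add: n_def)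
  obtain x where x: "x \<in> V" using not_complete by (auto simp: sg_complete_def)
  have b: "b = c * n + 4"
    using row_identity[OF x] eq by (simp add: n_def algebra_simps)
  have "c = 0"
  proof (rule ccontr)
    assume "c \<noteq> 0"
    then have "\<bar>c * n\<bar> \<ge> 1 * n" using n by (simp add: abs_mult mult_right_mono)
    then show False using b b_bounds[OF x] n by linarith
  qed
  with b eq show ?thesis by simp
qed

lemma iso_G2_if_complete:
  assumes complete: "sg_complete V s" and ne: "a + b \<noteq> 2 * c" and x: "x \<in> V"
  shows "sg_iso V s G2_V G2_sig"
proof -
  obtain p1 p2 p3 q1 q2 where frame: "nbhd_frame x p1 p2 p3 q1 q2"
    using x by (rule nbhd_frame_exists)
  note in_V = frame_in_V[OF frame] and distinct = frame_distinct[OF frame]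
  have nonzero: "s u v \<noteq> 0" if "u \<in> V" "v \<in> V" "u \<noteq> v" for u v
    using complete that by (simp add: sg_complete_def)
  have "\<bar>s p1 p2\<bar> + \<bar>s p1 p3\<bar> + \<bar>s p2 p3\<bar> = 3" "s p1 q1 \<noteq> 0"
    using nonzero[of p1 p2] nonzero[of p1 p3] nonzero[of p2 p3] nonzero[of p1 q1] in_V distinct
      s_cases[of p1 p2] s_cases[of p1 p3] s_cases[of p2 p3] by auto
  then have a: "a = -4"
    using local_configuration[OF ne frame] by auto
  have V_cnbrs: "V = cnbrs x"
    using nonzero[OF x] x by (auto simp: cnbrs_def nbrs_def)
  moreover have "cnbrs x = {x, p1, p2, p3, q1, q2}"
    by (simp add: cnbrs_def frame_nbrs[OF frame])
  ultimately have V: "V = {x, p1, p2, p3, q1, q2}" by (rule trans)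
  define f :: "'a \<Rightarrow> nat" where
    "f u = (if u = x then 0 else if u = q1 then 1 else if u = q2 then 2 else if u = p1 then 3 else if u = p2 then 4 else 5)" for u
  have f: "f x = 0" "f q1 = 1" "f q2 = 2" "f p1 = 3" "f p2 = 4" "f p3 = 5"
    using distinct by (auto simp: f_def)
  have bij: "bij_betw f V G2_V"
    unfolding bij_betw_def inj_on_def V G2_V_def using f by auto
  have f_side: "f u < 3 \<longleftrightarrow> u = x \<or> s x u = -1" "f u < 6" if "u \<in> V" for u
    using that f frame_signs[OF frame] unfolding V by auto
  have "G2_sig (f u) (f v) = s u v" if "u \<in> V" "v \<in> V" for u v
  proof (cases "u = v")
    case False
    then have "f u \<noteq> f v" using bij that by (auto simp: bij_betw_def inj_on_def)
    with False show ?thesis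
      using cnbrs_signs_if_a_eq_minus4[OF a, of u x v] that V_cnbrs f_side[OF that(1)] f_side[OF that(2)]
      by (simp add: G2_sig_eq)
  qed (simp add: G2_sig_def)
  with bij show ?thesis by (auto simp: sg_iso_def)
qed

lemma c_neg_if_row_neg:
  assumes "x \<in> V" "3 * a + 2 * b > -4"
  shows "c < 0" "card V > 6"
proof -
  have "c * (int (card V) - 6) < 0" using row_identity[OF assms(1)] assms(2) by linarith
  moreover have "int (card V) - 6 \<ge> 0" using card_V_ge_6[OF assms(1)] by simp
  ultimately show "c < 0" "card V > 6"
    by (auto simp: mult_less_0_iff)
qed

lemma pos_nbrs_path_if_2_m2:
  assumes ne: "a + b \<noteq> 2 * c" and ab: "a = 2" "b = -2"
    and u: "s y u1 = 1" "s y u2 = 1" "s y u3 = 1" "distinct [u1, u2, u3]"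
  shows "s u1 u2 + s u1 u3 + s u2 u3 = 2 \<and> \<bar>s u1 u2\<bar> + \<bar>s u1 u3\<bar> + \<bar>s u2 u3\<bar> = 2"
proof -
  have y: "y \<in> V" using u(1) in_V_if_s_nonzero[of y u1] by simp
  obtain p1 p2 p3 q1 q2 where frame: "nbhd_frame y p1 p2 p3 q1 q2"
    using y by (rule nbhd_frame_exists)
  have "s p1 p2 + s p1 p3 + s p2 p3 = 2 \<and> \<bar>s p1 p2\<bar> + \<bar>s p1 p3\<bar> + \<bar>s p2 p3\<bar> = 2"
    using local_configuration[OF ne frame] ab by auto
  moreover have "u1 \<in> {p1, p2, p3}" "u2 \<in> {p1, p2, p3}" "u3 \<in> {p1, p2, p3}"
    using u(1-3) frame_pos_iff[OF frame] by blast+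
  ultimately show ?thesis
    using u(4) by (auto simp: s_sym)
qed


lemma no_centred_pos_path_if_2_m2:
  assumes ne: "a + b \<noteq> 2 * c" and ab: "a = 2" "b = -2"
    and P: "pos_nbrs x = {m, e1, e2}" "distinct [m, e1, e2]"
    and path: "s m e1 = 1" "s m e2 = 1" "s e1 e2 = 0"
  shows False
proof -
  have sx: "s x m = 1" "s x e1 = 1" "s x e2 = 1"
    using P(1) mem_pos_nbrs_iff by blast+
  then have "x \<noteq> m" "x \<noteq> e1" "x \<noteq> e2" by auto
  have e1: "e1 \<in> V" using sx(2) in_V_if_s_nonzero[of x e1] by simp
  \<comment> \<open>The third positive neighbour \<open>w\<close> of \<open>e1\<close> is adjacent to \<open>x\<close> or to \<open>m\<close>, so it is \<open>e2\<close>.\<close>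
  obtain w where w: "s e1 w = 1" "w \<noteq> x" "w \<noteq> m"
    using pos_nbr_avoiding[OF e1] by metis
  have "w \<noteq> e1" using w(1) by auto
  have "s x m + s x w + s m w = 2 \<and> \<bar>s x m\<bar> + \<bar>s x w\<bar> + \<bar>s m w\<bar> = 2"
    using pos_nbrs_path_if_2_m2[OF ne ab, of e1 x m w] sx path w \<open>x \<noteq> m\<close> by (simp add: s_sym)
  then have "s x w = 1 \<or> s m w = 1"
    using sx(1) s_cases[of x w] s_cases[of m w] by auto
  moreover have "pos_nbrs m = {x, e1, e2}"
    using pos_nbrs_eq[of m x e1 e2] sx path P(2) \<open>x \<noteq> e1\<close> \<open>x \<noteq> e2\<close> by (simp add: s_sym[of m x])
  ultimately have "w = e2"
    using w \<open>w \<noteq> e1\<close> P(1) mem_pos_nbrs_iff by auto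
  with w(1) path(3) show False by simp
qed

lemma not_2_m2:
  assumes ne: "a + b \<noteq> 2 * c" and ab: "a = 2" "b = -2" and x: "x \<in> V"
  shows False
proof -
  obtain p1 p2 p3 q1 q2 where frame: "nbhd_frame x p1 p2 p3 q1 q2"
    using x by (rule nbhd_frame_exists)
  have P: "pos_nbrs x = {p1, p2, p3}" "distinct [p1, p2, p3]"
    using frame_pos_nbrs[OF frame] frame_distinct[OF frame] by auto
  have "s p1 p2 + s p1 p3 + s p2 p3 = 2 \<and> \<bar>s p1 p2\<bar> + \<bar>s p1 p3\<bar> + \<bar>s p2 p3\<bar> = 2"
    using pos_nbrs_path_if_2_m2[OF ne ab] frame_signs[OF frame] P(2) by simp
  then consider "s p1 p2 = 1" "s p1 p3 = 1" "s p2 p3 = 0"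
    | "s p1 p2 = 1" "s p2 p3 = 1" "s p1 p3 = 0"
    | "s p1 p3 = 1" "s p2 p3 = 1" "s p1 p2 = 0"
    using s_cases[of p1 p2] s_cases[of p1 p3] s_cases[of p2 p3] by auto
  then show False
  proof cases
    case 1
    with P show False by (intro no_centred_pos_path_if_2_m2[OF ne ab, of x p1 p2 p3])
  next
    case 2
    with P show False
      by (intro no_centred_pos_path_if_2_m2[OF ne ab, of x p2 p1 p3]) (auto simp: insert_commute s_sym[of p2 p1])
  next
    case 3
    with P show False
      by (intro no_centred_pos_path_if_2_m2[OF ne ab, of x p3 p1 p2]) (auto simp: insert_commute s_sym[of p3])
  qed
qed

lemma uniform_nbhd_signs:
  assumes ne: "a + b \<noteq> 2 * c" and ab: "a \<in> {0, 2}" "b \<in> {0, 1}"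
  shows uniform_pos_pos: "s y u = 1 \<Longrightarrow> s y w = 1 \<Longrightarrow> u \<noteq> w \<Longrightarrow> 2 * s u w = a"
    and uniform_neg_neg: "s y u = -1 \<Longrightarrow> s y w = -1 \<Longrightarrow> u \<noteq> w \<Longrightarrow> s u w = -b"
    and uniform_pos_neg: "s y u = 1 \<Longrightarrow> s y w = -1 \<Longrightarrow> s u w = 0"
proof -
  have at_y: "(s y u = 1 \<longrightarrow> s y w = 1 \<longrightarrow> u \<noteq> w \<longrightarrow> 2 * s u w = a)
      \<and> (s y u = -1 \<longrightarrow> s y w = -1 \<longrightarrow> u \<noteq> w \<longrightarrow> s u w = -b) \<and> (s y u = 1 \<longrightarrow> s y w = -1 \<longrightarrow> s u w = 0)"
    if y: "y \<in> V" for y u w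
  proof -
    obtain p1 p2 p3 q1 q2 where frame: "nbhd_frame y p1 p2 p3 q1 q2"
      using y by (rule nbhd_frame_exists)
    show ?thesis
      using frame_pos_iff[OF frame, of u] frame_pos_iff[OF frame, of w] frame_neg_iff[OF frame, of u]
        frame_neg_iff[OF frame, of w] frame_signs_if_uniform[OF ne ab frame]
      by (auto simp: s_sym[of _ p1] s_sym[of p3 p2] s_sym[of q2 q1])
  qed
  show "s y u = 1 \<Longrightarrow> s y w = 1 \<Longrightarrow> u \<noteq> w \<Longrightarrow> 2 * s u w = a" for y u w
    using at_y[of y u w] in_V_if_s_nonzero[of y u] by simp
  show "s y u = -1 \<Longrightarrow> s y w = -1 \<Longrightarrow> u \<noteq> w \<Longrightarrow> s u w = -b" for y u w
    using at_y[of y u w] in_V_if_s_nonzero[of y u] by simp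
  show "s y u = 1 \<Longrightarrow> s y w = -1 \<Longrightarrow> s u w = 0" for y u w
    using at_y[of y u w] in_V_if_s_nonzero[of y u] by simp
qed


lemma card_V_eq_12_if_2_1:
  assumes "a = 2" "b = 1" "x \<in> V" "4 dvd card V" "3 dvd card V"
  shows "card V = 12"
proof -
  have n: "card V > 6" using c_neg_if_row_neg[OF assms(3)] assms(1,2) by simp
  have "c * (int (card V) - 6) = - 12" using row_identity[OF assms(3)] assms(1,2) by simp
  then have "int (card V) - 6 \<le> 12" using n by (intro le_if_mult_eq_neg) auto
  with n assms(4,5) show ?thesis by presburger
qed

lemma iso_S12_if_2_1:
  assumes ne: "a + b \<noteq> 2 * c" and ab: "a = 2" "b = 1" and x: "x \<in> V"
  shows "sg_iso V s S12_V S12_sig"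
proof -
  have ab': "a \<in> {0, 2}" "b \<in> {0, 1}" using ab by simp_all
  have pos_trans: "s u w = 1" if "s u v = 1" "s v w = 1" "u \<noteq> w" for u v w
    using uniform_pos_pos[OF ne ab', of v u w] that ab by (simp add: s_sym[of u v])
  have neg_trans: "s u w = -1" if "s u v = -1" "s v w = -1" "u \<noteq> w" for u v w
    using uniform_neg_neg[OF ne ab', of v u w] that ab by (simp add: s_sym[of u v])
  have pos_deg: "card {w. s u w = 1} = 3" and neg_deg: "card {w. s u w = -1} = 2" if "u \<in> V" for u
  proof -
    have "{w. s u w = 1} = pos_nbrs u" "{w. s u w = -1} = neg_nbrs u"
      by (auto simp: mem_pos_nbrs_iff mem_neg_nbrs_iff)
    then show "card {w. s u w = 1} = 3" "card {w. s u w = -1} = 2"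
      using card_pos_nbrs_neg_nbrs[OF that] by simp_all
  qed
  have "4 * card (sign_class s 1 ` V) = card V" "3 * card (sign_class s (-1) ` V) = card V"
    using card_sign_classes[OF signed _ pos_trans pos_deg] card_sign_classes[OF signed _ neg_trans neg_deg]
    by simp_all
  then have card: "card V = 12"
    using card_V_eq_12_if_2_1[OF ab x] by (metis dvd_triv_left)
  from signed card pos_trans neg_trans pos_deg neg_deg show ?thesis
    by (rule sg_iso_S12_if_sign_classes)
qed

lemma far_vertex_counts:
  assumes ne: "a + b \<noteq> 2 * c" and frame: "nbhd_frame x p1 p2 p3 q1 q2"
    and u: "u \<in> V" "u \<notin> {x, p1, p2, p3, q1, q2}" and c: "c < 0"
    and not_both: "\<not> (s q1 u = 1 \<and> s q2 u = 1)"
  shows "of_bool (s q1 u = 1) + of_bool (s q2 u = 1) = (1::int)"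
    and "of_bool (s p1 u = -1) + of_bool (s p2 u = -1) + of_bool (s p3 u = -1) = (1::int)"
    and "c = of_bool (s p1 u = 1) + of_bool (s p2 u = 1) + of_bool (s p3 u = 1)
      + of_bool (s q1 u = -1) + of_bool (s q2 u = -1) - 2"
proof -
  have "of_bool (s q1 u = 1) + of_bool (s q2 u = 1) \<le> (1::int)"
    using not_both by auto
  moreover note far = frame_far_vertex[OF frame u] and comm = frame_commute[OF frame ne u(1)]
  moreover have "of_bool P \<ge> (0::int)" for P by simp
  ultimately show "of_bool (s q1 u = 1) + of_bool (s q2 u = 1) = (1::int)"
    and "of_bool (s p1 u = -1) + of_bool (s p2 u = -1) + of_bool (s p3 u = -1) = (1::int)"
    and "c = of_bool (s p1 u = 1) + of_bool (s p2 u = 1) + of_bool (s p3 u = 1)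
      + of_bool (s q1 u = -1) + of_bool (s q2 u = -1) - 2"
    using c s_eq_of_bool[of p1 u] s_eq_of_bool[of p2 u] s_eq_of_bool[of p3 u] s_eq_of_bool[of q1 u]
      s_eq_of_bool[of q2 u] abs_s_eq_of_bool[of p1 u] abs_s_eq_of_bool[of p2 u] abs_s_eq_of_bool[of p3 u]
      abs_s_eq_of_bool[of q1 u] abs_s_eq_of_bool[of q2 u]
    by linarith+
qed

lemma far_count_if_2_0:
  assumes ne: "a + b \<noteq> 2 * c" and ab: "a = 2" "b = 0"
    and frame: "nbhd_frame x p1 p2 p3 q1 q2" and u: "u \<in> V" "u \<notin> {x, p1, p2, p3, q1, q2}"
  shows "of_bool (s q1 u = -1) + of_bool (s q2 u = -1) = (c + 2 :: int)"
proof -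
  have ab': "a \<in> {0, 2}" "b \<in> {0, 1}" using ab by simp_all
  have c: "c < 0" using c_neg_if_row_neg[OF u(1)] ab by simp
  note signs = frame_signs[OF frame] and distinct = frame_distinct[OF frame]
    and vals = frame_signs_if_uniform[OF ne ab' frame, unfolded ab]
  have "pos_nbrs p1 = {x, p2, p3}" "pos_nbrs p2 = {x, p1, p3}" "pos_nbrs p3 = {x, p1, p2}"
    using pos_nbrs_eq[of p1 x p2 p3] pos_nbrs_eq[of p2 x p1 p3] pos_nbrs_eq[of p3 x p1 p2] vals signs distinct
    by (simp_all add: s_sym[of p2 p1] s_sym[of p3 p1] s_sym[of p3 p2])
  then have "s p1 u \<noteq> 1" "s p2 u \<noteq> 1" "s p3 u \<noteq> 1"
    using u(2) mem_pos_nbrs_iff by blast+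
  moreover have not_both: "\<not> (s q1 u = 1 \<and> s q2 u = 1)"
    using uniform_pos_pos[OF ne ab', of u q1 q2] vals distinct ab by (auto simp: s_sym[of u])
  ultimately show ?thesis
    using far_vertex_counts(3)[OF ne frame u c not_both] by simp
qed

lemma not_2_0:
  assumes ne: "a + b \<noteq> 2 * c" and ab: "a = 2" "b = 0" and x: "x \<in> V"
  shows False
proof -
  have ab': "a \<in> {0, 2}" "b \<in> {0, 1}" using ab by simp_all
  have c: "c < 0" using c_neg_if_row_neg[OF x] ab by simp
  obtain p1 p2 p3 q1 q2 where frame: "nbhd_frame x p1 p2 p3 q1 q2"
    using x by (rule nbhd_frame_exists)
  note signs = frame_signs[OF frame] and far = far_count_if_2_0[OF ne ab frame]
    and vals = frame_signs_if_uniform[OF ne ab' frame, unfolded ab]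
  obtain z1 z2 where "s q1 z1 = -1" "z1 \<noteq> x" "s q2 z2 = -1" "z2 \<noteq> x"
    using neg_nbr_avoiding[OF frame_in_V(5)[OF frame]] neg_nbr_avoiding[OF frame_in_V(6)[OF frame]] by metis
  then have z: "neg_nbrs q1 = {x, z1}" "neg_nbrs q2 = {x, z2}" "s q1 z1 = -1" "z1 \<noteq> x"
    using neg_nbrs_eq signs by metis+
  then have "z1 \<in> V" "z1 \<notin> {x, p1, p2, p3, q1, q2}"
    using in_V_if_s_nonzero[of q1 z1] vals by (auto simp: s_sym[of q1])
  then have "1 + of_bool (s q2 z1 = -1) = c + 2" using far z(3) by force
  then have c_eq: "c = -1" using c by (cases "s q2 z1 = -1") simp_all
  have "u \<in> {x, p1, p2, p3, q1, q2, z1, z2}" if "u \<in> V" for u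
  proof (rule ccontr)
    assume "u \<notin> {x, p1, p2, p3, q1, q2, z1, z2}"
    with that have "s q1 u = -1 \<or> s q2 u = -1" using far[of u] c_eq by auto
    with \<open>u \<notin> _\<close> show False using z mem_neg_nbrs_iff by blast
  qed
  then have "card V \<le> card {x, p1, p2, p3, q1, q2, z1, z2}" by (intro card_mono) auto
  also have "\<dots> \<le> 8" using card_length[of "[x, p1, p2, p3, q1, q2, z1, z2]"] by simp
  \<comment> \<open>whereas the row identity with \<open>c = -1\<close> gives \<open>card V = 16\<close>\<close>
  finally show False using row_identity[OF x] ab c_eq by simp
qed

lemma far_counts_if_0_1:
  assumes ne: "a + b \<noteq> 2 * c" and ab: "a = 0" "b = 1"
    and frame: "nbhd_frame x p1 p2 p3 q1 q2" and u: "u \<in> V" "u \<notin> {x, p1, p2, p3, q1, q2}"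
  shows "of_bool (s q1 u = 1) + of_bool (s q2 u = 1) = (1::int)"
    and "of_bool (s p1 u = -1) + of_bool (s p2 u = -1) + of_bool (s p3 u = -1) = (1::int)"
    and "of_bool (s p1 u = 1) + of_bool (s p2 u = 1) + of_bool (s p3 u = 1) = (c + 2 :: int)"
proof -
  have ab': "a \<in> {0, 2}" "b \<in> {0, 1}" using ab by simp_all
  have c: "c < 0" using c_neg_if_row_neg[OF u(1)] ab by simp
  note signs = frame_signs[OF frame] and distinct = frame_distinct[OF frame]
    and vals = frame_signs_if_uniform[OF ne ab' frame, unfolded ab]
  have "neg_nbrs q1 = {x, q2}" "neg_nbrs q2 = {x, q1}"
    using neg_nbrs_eq[of q1 x q2] neg_nbrs_eq[of q2 x q1] signs vals distinct by (simp_all add: s_sym[of q2 q1])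
  then have "s q1 u \<noteq> -1" "s q2 u \<noteq> -1"
    using u(2) mem_neg_nbrs_iff by blast+
  moreover have not_both: "\<not> (s q1 u = 1 \<and> s q2 u = 1)"
    using uniform_pos_pos[OF ne ab', of u q1 q2] vals distinct ab by (auto simp: s_sym[of u])
  ultimately show "of_bool (s q1 u = 1) + of_bool (s q2 u = 1) = (1::int)"
    and "of_bool (s p1 u = -1) + of_bool (s p2 u = -1) + of_bool (s p3 u = -1) = (1::int)"
    and "of_bool (s p1 u = 1) + of_bool (s p2 u = 1) + of_bool (s p3 u = 1) = (c + 2 :: int)"
    using far_vertex_counts[OF ne frame u c not_both] by simp_all
qed

lemma not_0_1:
  assumes ne: "a + b \<noteq> 2 * c" and ab: "a = 0" "b = 1" and x: "x \<in> V"
  shows False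
proof -
  have ab': "a \<in> {0, 2}" "b \<in> {0, 1}" using ab by simp_all
  have pos_pos: "s u w = 0" if "s y u = 1" "s y w = 1" for y u w
    using uniform_pos_pos[OF ne ab' that] ab by (cases "u = w") simp_all
  note pos_neg = uniform_pos_neg[OF ne ab']
  obtain p1 p2 p3 q1 q2 where frame: "nbhd_frame x p1 p2 p3 q1 q2"
    using x by (rule nbhd_frame_exists)
  have c: "c < 0" using c_neg_if_row_neg[OF x] ab by simp
  note far = far_counts_if_0_1[OF ne ab frame] and signs = frame_signs[OF frame]
  obtain y where y: "s p1 y = 1" "y \<noteq> x"
    using pos_nbr_avoiding[OF frame_in_V(2)[OF frame]] by metis
  have y_far: "y \<in> V" "y \<notin> {x, p1, p2, p3, q1, q2}"
    using y in_V_if_s_nonzero[of p1 y] pos_pos[of x p1] pos_neg[of x p1] signs by auto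
  have c_eq: "c = -1"
    using far(3)[OF y_far] y(1) c by (auto split: split_of_bool_asm)
  have "(s q1 y = 1 \<and> s q2 y \<noteq> 1) \<or> (s q2 y = 1 \<and> s q1 y \<noteq> 1)"
    using far(1)[OF y_far] by (auto split: split_of_bool_asm)
  then obtain q q' where q: "s q y = 1" "s q' y \<noteq> 1" "{q, q'} = {q1, q2}" by blast
  have y_p: "s p2 y \<noteq> 1" "s p3 y \<noteq> 1" "s p2 y = -1 \<or> s p3 y = -1"
    using far(2,3)[OF y_far] y(1) c_eq by (auto split: split_of_bool_asm)
  \<comment> \<open>A third positive neighbour \<open>z\<close> of \<open>y\<close> is non-adjacent to the two \<open>p\<^sub>i\<close> adjacent to \<open>y\<close>,
    but as a far vertex it needs two neighbours among \<open>p1, p2, p3\<close>.\<close>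
  obtain z where z: "s y z = 1" "z \<noteq> p1" "z \<noteq> q"
    using pos_nbr_avoiding[OF y_far(1)] by metis
  have "s x y = 0" using y_far(2) frame_zero_iff[OF frame] by blast
  then have z_far: "z \<in> V" "z \<notin> {x, p1, p2, p3, q1, q2}"
    using z q y_p in_V_if_s_nonzero[of y z] by (auto simp: s_sym[of _ y] doubleton_eq_iff)
  have z_p: "s p z = 0" if "s p y \<noteq> 0" for p
  proof (cases "s p y = 1")
    case True
    then show ?thesis using pos_pos[of y p z] z(1) by (simp add: s_sym[of p y])
  next
    case False
    with that have "s y p = -1" using s_cases[of p y] by (auto simp: s_sym[of p y])
    then show ?thesis using pos_neg[of y z p] z(1) by (simp add: s_sym[of z p])
  qed
  show False
    using far(2,3)[OF z_far] c_eq z_p[of p1] z_p[of p2] z_p[of p3] y(1) y_p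
    by (auto split: split_of_bool_asm)
qed

lemma not_0_0:
  assumes ne: "a + b \<noteq> 2 * c" and ab: "a = 0" "b = 0" and x: "x \<in> V"
  shows False
proof -
  have ab': "a \<in> {0, 2}" "b \<in> {0, 1}" using ab by simp_all
  have no_triangle: "s u w = 0" if "s y u \<noteq> 0" "s y w \<noteq> 0" for y u w
    using that uniform_pos_pos[OF ne ab', of y u w] uniform_neg_neg[OF ne ab', of y u w]
      uniform_pos_neg[OF ne ab', of y u w] uniform_pos_neg[OF ne ab', of y w u] s_cases[of y u] s_cases[of y w] ab
    by (cases "u = w") (auto simp: s_sym[of w u])
  have disjoint: "nbrs y \<inter> nbrs w = {}" if "s y w \<noteq> 0" for y w
    using no_triangle[of w y] that by (auto simp: mem_nbrs_iff s_sym[of w y])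
  obtain p1 p2 p3 q1 q2 where frame: "nbhd_frame x p1 p2 p3 q1 q2"
    using x by (rule nbhd_frame_exists)
  have xp1: "s x p1 \<noteq> 0" and p1: "p1 \<in> V" using frame_signs[OF frame] frame_in_V[OF frame] by simp_all
  have card_union: "card (nbrs x \<union> nbrs p1) = 10"
    using card_Un_disjoint[of "nbrs x" "nbrs p1"] disjoint[OF xp1] card_nbrs[OF x] card_nbrs[OF p1] finite_V
    by (simp add: nbrs_def)
  have sub: "nbrs x \<union> nbrs p1 \<subseteq> V" by (auto simp: nbrs_def)
  then have "card V \<ge> 10" using card_union card_mono[OF finite_V] by metis
  moreover have "c * (int (card V) - 6) = -4" using row_identity[OF x] ab by simp
  ultimately have "int (card V) - 6 \<le> 4" using le_if_mult_eq_neg by simp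
  with \<open>card V \<ge> 10\<close> have "card V = 10" by simp
  then have V: "V = nbrs x \<union> nbrs p1" and c_eq: "c = -1"
    using card_subset_eq[OF finite_V sub] card_union row_identity[OF x] ab by simp_all
  obtain z where z: "s p1 z \<noteq> 0" "z \<noteq> x"
    using neg_nbr_avoiding[OF p1] by (metis zero_neq_neg_one)
  have z_V: "z \<in> V" using z(1) in_V_if_s_nonzero by blast
  have "nbrs z \<subseteq> nbrs x"
    using disjoint[OF z(1)] V by (auto simp: nbrs_def)
  then have nbrs_z: "nbrs z = {p1, p2, p3, q1, q2}"
    using card_subset_eq[of "nbrs x" "nbrs z"] card_nbrs[OF x] card_nbrs[OF z_V] finite_V frame_nbrs[OF frame]
    by (simp add: nbrs_def)
  have "z \<notin> nbrs x" using disjoint[OF xp1] z(1) by (auto simp: mem_nbrs_iff)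
  then have "z \<notin> {x, p1, p2, p3, q1, q2}" using z(2) frame_nbrs[OF frame] by simp
  from frame_far_vertex[OF frame z_V this] c_eq
  have "s z p1 + s z p2 + s z p3 - s z q1 - s z q2 = -1" by (simp add: s_sym[of _ z])
  moreover have "s z p1 + s z p2 + s z p3 + s z q1 + s z q2 = 1"
    using row_sum[OF z_V] frame_distinct[OF frame] unfolding sum_row_nbrs nbrs_z by (simp add: add.assoc)
  moreover have "s z q1 \<noteq> 0" "s z q2 \<noteq> 0" using nbrs_z by (auto simp: mem_nbrs_iff)
  ultimately show False using s_cases[of z q1] s_cases[of z q2] by auto
qed

end

section \<open>The classification\<close>

lemma srsg5_net1_parameters:
  assumes srsg: "SRSG V \<sigma>" and regular: "sg_regular V \<sigma> 5" and net: "net_regular V \<sigma> 1"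
    and x: "x \<in> V"
  obtains a b c where "srsg5_net1 V \<sigma> a b c" and "sg_complete V \<sigma> \<longrightarrow> a + b \<noteq> 2 * c"
proof -
  have signed: "signed_graph V \<sigma>" using srsg by (simp add: SRSG_def)
  obtain r a b c where conds: "srsg_conds V \<sigma> r a b c" using srsg by (auto simp: SRSG_def)
  have "int r = 5"
    using conds x adj_sq_diag[OF signed x] regular by (simp add: srsg_conds_def sg_regular_def)
  with conds have conds5: "srsg_conds V \<sigma> 5 a b c" by simp
  show ?thesis
  proof (cases "sg_complete V \<sigma>")
    case True
    \<comment> \<open>Without non-adjacent pairs the parameter \<open>c\<close> is arbitrary; choose it with \<open>a + b \<noteq> 2c\<close>.\<close>
    define c' :: int where "c' = (if a + b = 0 then 1 else 0)"
    have "srsg_conds V \<sigma> 5 a b c'"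
      using conds5 True by (auto simp: srsg_conds_def sg_complete_def)
    then have "srsg5_net1 V \<sigma> a b c'"
      using signed regular net by unfold_locales
    then show ?thesis by (rule that) (simp add: c'_def)
  next
    case False
    have "srsg5_net1 V \<sigma> a b c"
      using signed conds5 regular net by unfold_locales
    then show ?thesis by (rule that) (simp add: False)
  qed
qed

theorem srsg5_net1_classification:
  assumes srsg: "SRSG V \<sigma>" and connected: "sg_connected V \<sigma>"
    and regular: "sg_regular V \<sigma> 5" and net: "net_regular V \<sigma> 1"
  shows "sg_iso V \<sigma> G2_V G2_sig \<or> sg_iso V \<sigma> S12_V S12_sig"
proof -
  obtain x where x: "x \<in> V" using connected by (auto simp: sg_connected_def)
  obtain a b c where "srsg5_net1 V \<sigma> a b c" and complete_ne: "sg_complete V \<sigma> \<longrightarrow> a + b \<noteq> 2 * c"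
    using srsg regular net x by (rule srsg5_net1_parameters)
  then interpret srsg5_net1 V \<sigma> a b c by simp
  show ?thesis
  proof (cases "sg_complete V \<sigma>")
    case True
    with complete_ne x show ?thesis by (blast intro: iso_G2_if_complete)
  next
    case False
    have ne: "a + b \<noteq> 2 * c"
      using a_eq_minus4_if_a_plus_b_eq complete_if_a_eq_minus4[OF _ connected] False by blast
    obtain p1 p2 p3 q1 q2 where frame: "nbhd_frame x p1 p2 p3 q1 q2"
      using x by (rule nbhd_frame_exists)
    consider "a = -4" | "a = 2" "b = -2" | "a = 0" "b = 0" | "a = 0" "b = 1" | "a = 2" "b = 0" | "a = 2" "b = 1"
      using local_configuration[OF ne frame] by auto
    then show ?thesis
    proof cases
      case 1
      with False show ?thesis using complete_if_a_eq_minus4[OF _ connected] by blast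
    next
      case 2
      with not_2_m2[OF ne _ _ x] show ?thesis by blast
    next
      case 3
      with not_0_0[OF ne _ _ x] show ?thesis by blast
    next
      case 4
      with not_0_1[OF ne _ _ x] show ?thesis by blast
    next
      case 5
      with not_2_0[OF ne _ _ x] show ?thesis by blast
    next
      case 6
      with iso_S12_if_2_1[OF ne _ _ x] show ?thesis by blast
    qed
  qed
qed

theorem theorem3p11:
  shows "srsg_params_complete G2_V G2_sig 6 5 (-4) 4
       \<and> sg_connected G2_V G2_sig \<and> sg_regular G2_V G2_sig 5 \<and> net_regular G2_V G2_sig 1
       \<and> srsg_params S12_V S12_sig 12 5 2 1 (-2)
       \<and> sg_connected S12_V S12_sig \<and> sg_regular S12_V S12_sig 5 \<and> net_regular S12_V S12_sig 1
       \<and> \<not> sg_iso G2_V G2_sig S12_V S12_sig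
       \<and> (\<forall>(V :: 'a set) \<sigma>. SRSG V \<sigma> \<and> sg_connected V \<sigma> \<and> sg_regular V \<sigma> 5 \<and> net_regular V \<sigma> 1
            \<longrightarrow> sg_iso V \<sigma> G2_V G2_sig \<or> sg_iso V \<sigma> S12_V S12_sig)"
  using G2_params G2_connected G2_regular G2_net_regular S12_params S12_connected S12_regular
    S12_net_regular G2_not_iso_S12 srsg5_net1_classification by blast

end
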